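(* For all $[M],[N]\in\mathrm{Iso}(Q)$, $\Delta([M]\cdot[N])=\Delta([M])\,\Delta([N])$ in $\mathbf H_Q\otimes\mathbf H_Q$. Consequently $\mathbf H_Q$ is a graded, connected, cocommutative bialgebra (hence Hopf algebra).
   Context: Let $Q$ be a quiver and $\mathrm{Rep}(Q,\mathbb{F}_1)$ the category of representations $(V_i,f_h)$ over $\mathbb{F}_1$ (each $V_i$ a finite pointed set, each $f_h:V_{h'}\to V_{h''}$ a pointed map injective off the preimage of the base point); subrepresentations are families of subsets containing the base points and stable under edge maps; quotients collapse the subrepresentation to the base points; direct sums are vertexwise with $V\oplus W=V\sqcup W$ with base points identified. Let $\mathrm{Iso}(Q)$ be the set of isomorphism classes, each with a fixed representative. $\mathbf H_Q$ is the $\mathbb C$-vector space of finitely supported functions $\mathrm{Iso}(Q)\to\mathbb C$, with basis of delta functions $[M]$, product $(f\cdot g)(M)=\sum_{L\subset M}f(M/L)g(L)$ (sum over subrepresentations $L$ of the representative $M$), graded by dimension vector, and coproduct $\Delta(f)([M],[N])=f([M\oplus N])$, i.e. $\Delta([M])=\sum_{(A,B):A\oplus B\cong M}[A]\otimes[B]$. The same definitions apply with $\mathrm{Rep}(Q,\mathbb{F}_1)$ replaced by its full subcategory of nilpotent representations. *)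

theory Defs
  imports Complex_Main
begin

text \<open>A quiver Q is given by a finite type of vertices 'v, a (finite) set E of arrows
  and source and target maps s t :: 'e => 'v.
  A representation over F1 is encoded as a pair (V, f): V i is the finite pointed set at
  vertex i, whose base point is the natural number 0; f h is the pointed map
  V (s h) -> V (t h), extended by 0 outside V (s h).\<close>

type_synonym ('v,'e) rep = "('v \<Rightarrow> nat set) \<times> ('e \<Rightarrow> nat \<Rightarrow> nat)"

definition is_rep :: "'e set \<Rightarrow> ('e \<Rightarrow> 'v) \<Rightarrow> ('e \<Rightarrow> 'v) \<Rightarrow> ('v,'e) rep \<Rightarrow> bool" where
  "is_rep E s t M \<longleftrightarrow>
     (\<forall>i. finite (fst M i) \<and> 0 \<in> fst M i) \<and>
     (\<forall>h. h \<notin> E \<longrightarrow> snd M h = (\<lambda>x. 0)) \<and>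
     (\<forall>h\<in>E. snd M h 0 = 0 \<and> snd M h ` fst M (s h) \<subseteq> fst M (t h) \<and>
          inj_on (snd M h) {x \<in> fst M (s h). snd M h x \<noteq> 0} \<and>
          (\<forall>x. x \<notin> fst M (s h) \<longrightarrow> snd M h x = 0))"

definition rep_iso :: "'e set \<Rightarrow> ('e \<Rightarrow> 'v) \<Rightarrow> ('e \<Rightarrow> 'v) \<Rightarrow> ('v,'e) rep \<Rightarrow> ('v,'e) rep \<Rightarrow> bool" where
  "rep_iso E s t M N \<longleftrightarrow> is_rep E s t M \<and> is_rep E s t N \<and>
     (\<exists>\<phi> :: 'v \<Rightarrow> nat \<Rightarrow> nat.
        (\<forall>i. bij_betw (\<phi> i) (fst M i) (fst N i) \<and> \<phi> i 0 = 0) \<and>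
        (\<forall>h\<in>E. \<forall>x\<in>fst M (s h). \<phi> (t h) (snd M h x) = snd N h (\<phi> (s h) x)))"

definition canon :: "'e set \<Rightarrow> ('e \<Rightarrow> 'v) \<Rightarrow> ('e \<Rightarrow> 'v) \<Rightarrow> ('v,'e) rep \<Rightarrow> ('v,'e) rep" where
  "canon E s t M = (SOME N. rep_iso E s t M N)"

text \<open>Iso(Q), as the set of fixed representatives.\<close>
definition IsoQ :: "'e set \<Rightarrow> ('e \<Rightarrow> 'v) \<Rightarrow> ('e \<Rightarrow> 'v) \<Rightarrow> ('v,'e) rep set" where
  "IsoQ E s t = {canon E s t M | M. is_rep E s t M}"

definition subreps :: "'e set \<Rightarrow> ('e \<Rightarrow> 'v) \<Rightarrow> ('e \<Rightarrow> 'v) \<Rightarrow> ('v,'e) rep \<Rightarrow> ('v \<Rightarrow> nat set) set" where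
  "subreps E s t M = {L. (\<forall>i. 0 \<in> L i \<and> L i \<subseteq> fst M i) \<and> (\<forall>h\<in>E. snd M h ` L (s h) \<subseteq> L (t h))}"

definition subrep :: "('e \<Rightarrow> 'v) \<Rightarrow> ('v,'e) rep \<Rightarrow> ('v \<Rightarrow> nat set) \<Rightarrow> ('v,'e) rep" where
  "subrep s M L = (L, \<lambda>h x. if x \<in> L (s h) then snd M h x else 0)"

definition quot :: "'e set \<Rightarrow> ('e \<Rightarrow> 'v) \<Rightarrow> ('e \<Rightarrow> 'v) \<Rightarrow> ('v,'e) rep \<Rightarrow> ('v \<Rightarrow> nat set) \<Rightarrow> ('v,'e) rep" where
  "quot E s t M L = (\<lambda>i. (fst M i - L i) \<union> {0},
     \<lambda>h x. if x \<in> fst M (s h) - L (s h) \<and> snd M h x \<notin> L (t h) then snd M h x else 0)"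

text \<open>Direct sum: disjoint union with base points identified (left summand on even, right on odd numbers).\<close>
definition enc_l :: "nat \<Rightarrow> nat" where "enc_l n = (if n = 0 then 0 else 2 * n)"
definition enc_r :: "nat \<Rightarrow> nat" where "enc_r n = (if n = 0 then 0 else 2 * n - 1)"

definition dsum :: "('v,'e) rep \<Rightarrow> ('v,'e) rep \<Rightarrow> ('v,'e) rep" where
  "dsum M N = (\<lambda>i. enc_l ` fst M i \<union> enc_r ` fst N i,
     \<lambda>h x. if x = 0 then 0 else if even x then enc_l (snd M h (x div 2))
           else enc_r (snd N h ((x + 1) div 2)))"

definition zrep :: "('v,'e) rep" where "zrep = (\<lambda>i. {0}, \<lambda>h x. 0)"

definition dimv :: "('v,'e) rep \<Rightarrow> 'v \<Rightarrow> nat" where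
  "dimv M = (\<lambda>i. card (fst M i) - 1)"

text \<open>H_Q: finitely supported functions Iso(Q) -> C (as functions vanishing off Iso(Q)).
  H_Q (x) H_Q and H_Q (x) H_Q (x) H_Q are identified with finitely supported functions on
  Iso(Q)^2 and Iso(Q)^3 via the bases of delta functions.\<close>
definition HQ :: "'e set \<Rightarrow> ('e \<Rightarrow> 'v) \<Rightarrow> ('e \<Rightarrow> 'v) \<Rightarrow> (('v,'e) rep \<Rightarrow> complex) set" where
  "HQ E s t = {f. (\<forall>X. f X \<noteq> 0 \<longrightarrow> X \<in> IsoQ E s t) \<and> finite {X. f X \<noteq> 0}}"

definition HQ2 :: "'e set \<Rightarrow> ('e \<Rightarrow> 'v) \<Rightarrow> ('e \<Rightarrow> 'v) \<Rightarrow> (('v,'e) rep \<times> ('v,'e) rep \<Rightarrow> complex) set" where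
  "HQ2 E s t = {F. (\<forall>A B. F (A, B) \<noteq> 0 \<longrightarrow> A \<in> IsoQ E s t \<and> B \<in> IsoQ E s t) \<and> finite {p. F p \<noteq> 0}}"

definition hbasis :: "('v,'e) rep \<Rightarrow> ('v,'e) rep \<Rightarrow> complex" where
  "hbasis M = (\<lambda>X. if X = M then 1 else 0)"

definition hsmult :: "complex \<Rightarrow> ('a \<Rightarrow> complex) \<Rightarrow> 'a \<Rightarrow> complex" where
  "hsmult c f = (\<lambda>X. c * f X)"

definition hmult :: "'e set \<Rightarrow> ('e \<Rightarrow> 'v) \<Rightarrow> ('e \<Rightarrow> 'v) \<Rightarrow> (('v,'e) rep \<Rightarrow> complex) \<Rightarrow> (('v,'e) rep \<Rightarrow> complex)
    \<Rightarrow> ('v,'e) rep \<Rightarrow> complex" where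
  "hmult E s t f g = (\<lambda>M. if M \<in> IsoQ E s t then
      (\<Sum>L\<in>subreps E s t M. f (canon E s t (quot E s t M L)) * g (canon E s t (subrep s M L))) else 0)"

text \<open>Product in H_Q (x) H_Q: ([A](x)[B]) ([C](x)[D]) = [A][C] (x) [B][D], extended bilinearly.\<close>
definition hmult2 :: "'e set \<Rightarrow> ('e \<Rightarrow> 'v) \<Rightarrow> ('e \<Rightarrow> 'v)
    \<Rightarrow> (('v,'e) rep \<times> ('v,'e) rep \<Rightarrow> complex) \<Rightarrow> (('v,'e) rep \<times> ('v,'e) rep \<Rightarrow> complex)
    \<Rightarrow> ('v,'e) rep \<times> ('v,'e) rep \<Rightarrow> complex" where
  "hmult2 E s t F G = (\<lambda>(X1, X2). if X1 \<in> IsoQ E s t \<and> X2 \<in> IsoQ E s t then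
      (\<Sum>L1\<in>subreps E s t X1. \<Sum>L2\<in>subreps E s t X2.
         F (canon E s t (quot E s t X1 L1), canon E s t (quot E s t X2 L2)) *
         G (canon E s t (subrep s X1 L1), canon E s t (subrep s X2 L2))) else 0)"

definition hcomult :: "'e set \<Rightarrow> ('e \<Rightarrow> 'v) \<Rightarrow> ('e \<Rightarrow> 'v) \<Rightarrow> (('v,'e) rep \<Rightarrow> complex)
    \<Rightarrow> ('v,'e) rep \<times> ('v,'e) rep \<Rightarrow> complex" where
  "hcomult E s t f = (\<lambda>(A, B). if A \<in> IsoQ E s t \<and> B \<in> IsoQ E s t then f (canon E s t (dsum A B)) else 0)"

definition hunit :: "'e set \<Rightarrow> ('e \<Rightarrow> 'v) \<Rightarrow> ('e \<Rightarrow> 'v) \<Rightarrow> ('v,'e) rep \<Rightarrow> complex" where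
  "hunit E s t = hbasis (canon E s t zrep)"

definition hcounit :: "'e set \<Rightarrow> ('e \<Rightarrow> 'v) \<Rightarrow> ('e \<Rightarrow> 'v) \<Rightarrow> (('v,'e) rep \<Rightarrow> complex) \<Rightarrow> complex" where
  "hcounit E s t f = f (canon E s t zrep)"

definition Hdeg :: "'e set \<Rightarrow> ('e \<Rightarrow> 'v) \<Rightarrow> ('e \<Rightarrow> 'v) \<Rightarrow> ('v \<Rightarrow> nat) \<Rightarrow> (('v,'e) rep \<Rightarrow> complex) set" where
  "Hdeg E s t d = {f \<in> HQ E s t. \<forall>X. f X \<noteq> 0 \<longrightarrow> dimv X = d}"

text \<open>H_Q with hmult, hunit, hcomult, hcounit is a graded, connected, cocommutative bialgebra.
  (Bilinearity of hmult and linearity of hcomult, hcounit hold by their pointwise definitions.)\<close>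
definition graded_connected_cocomm_bialgebra :: "'e set \<Rightarrow> ('e \<Rightarrow> 'v) \<Rightarrow> ('e \<Rightarrow> 'v) \<Rightarrow> bool" where
  "graded_connected_cocomm_bialgebra E s t \<longleftrightarrow>
    \<comment> \<open>associative unital algebra\<close>
    hunit E s t \<in> HQ E s t \<and>
    (\<forall>f\<in>HQ E s t. \<forall>g\<in>HQ E s t. hmult E s t f g \<in> HQ E s t) \<and>
    (\<forall>f\<in>HQ E s t. \<forall>g\<in>HQ E s t. \<forall>h\<in>HQ E s t. hmult E s t (hmult E s t f g) h = hmult E s t f (hmult E s t g h)) \<and>
    (\<forall>f\<in>HQ E s t. hmult E s t (hunit E s t) f = f \<and> hmult E s t f (hunit E s t) = f) \<and>
    \<comment> \<open>coassociative counital cocommutative coalgebra\<close>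
    (\<forall>f\<in>HQ E s t. hcomult E s t f \<in> HQ2 E s t) \<and>
    (\<forall>f\<in>HQ E s t. \<forall>A\<in>IsoQ E s t. \<forall>B\<in>IsoQ E s t. \<forall>C\<in>IsoQ E s t.
        hcomult E s t f (canon E s t (dsum A B), C) = hcomult E s t f (A, canon E s t (dsum B C))) \<and>
    (\<forall>f\<in>HQ E s t. \<forall>B. hcomult E s t f (canon E s t zrep, B) = f B \<and> hcomult E s t f (B, canon E s t zrep) = f B) \<and>
    (\<forall>f\<in>HQ E s t. \<forall>A B. hcomult E s t f (A, B) = hcomult E s t f (B, A)) \<and>
    \<comment> \<open>compatibility: comultiplication and counit are algebra maps\<close>
    (\<forall>f\<in>HQ E s t. \<forall>g\<in>HQ E s t. hcomult E s t (hmult E s t f g) = hmult2 E s t (hcomult E s t f) (hcomult E s t g)) \<and>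
    (\<forall>A B. hcomult E s t (hunit E s t) (A, B) = hunit E s t A * hunit E s t B) \<and>
    (\<forall>f\<in>HQ E s t. \<forall>g\<in>HQ E s t. hcounit E s t (hmult E s t f g) = hcounit E s t f * hcounit E s t g) \<and>
    hcounit E s t (hunit E s t) = 1 \<and>
    \<comment> \<open>grading by dimension vectors\<close>
    (\<forall>d e. \<forall>f\<in>Hdeg E s t d. \<forall>g\<in>Hdeg E s t e. hmult E s t f g \<in> Hdeg E s t (\<lambda>i. d i + e i)) \<and>
    (\<forall>d. \<forall>f\<in>Hdeg E s t d. \<forall>A B. hcomult E s t f (A, B) \<noteq> 0 \<longrightarrow> (\<lambda>i. dimv A i + dimv B i) = d) \<and>
    \<comment> \<open>connected: degree-0 part is spanned by the unit\<close>
    hunit E s t \<in> Hdeg E s t (\<lambda>i. 0) \<and>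
    (\<forall>f\<in>Hdeg E s t (\<lambda>i. 0). \<exists>c. f = hsmult c (hunit E s t))"

definition has_antipode :: "'e set \<Rightarrow> ('e \<Rightarrow> 'v) \<Rightarrow> ('e \<Rightarrow> 'v) \<Rightarrow> bool" where
  "has_antipode E s t \<longleftrightarrow> (\<exists>S. (\<forall>f\<in>HQ E s t. S f \<in> HQ E s t) \<and>
     (\<forall>f\<in>HQ E s t. \<forall>g\<in>HQ E s t. S (\<lambda>X. f X + g X) = (\<lambda>X. S f X + S g X)) \<and>
     (\<forall>c. \<forall>f\<in>HQ E s t. S (hsmult c f) = hsmult c (S f)) \<and>
     (\<forall>f\<in>HQ E s t. \<forall>X.
        (\<Sum>p\<in>{p. hcomult E s t f p \<noteq> 0}.
            hcomult E s t f p * hmult E s t (S (hbasis (fst p))) (hbasis (snd p)) X)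
          = hcounit E s t f * hunit E s t X \<and>
        (\<Sum>p\<in>{p. hcomult E s t f p \<noteq> 0}.
            hcomult E s t f p * hmult E s t (hbasis (fst p)) (S (hbasis (snd p))) X)
          = hcounit E s t f * hunit E s t X))"

end

theory Submission
  imports Defs
begin

(* The heart of the theorem is the compatibility Delta([M][N]) = Delta([M]) Delta([N]).  Since the
   coproduct only evaluates at direct sums, it reduces to one structural fact: the subrepresentations
   of A (+) B are exactly the sums L1 (+) L2 of subrepresentations of the summands, and for such
   a sum both the quotient and the subrepresentation split, (A (+) B)/(L1 (+) L2) = A/L1 (+) B/L2. *)

context
  fixes E :: "'e set" and s t :: "'e \<Rightarrow> 'v::finite"
begin

abbreviation "valid \<equiv> is_rep E s t"
abbreviation "isom \<equiv> rep_iso E s t"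
abbreviation "cls \<equiv> canon E s t"
abbreviation "Classes \<equiv> IsoQ E s t"

section \<open>Representations and their isomorphisms\<close>

lemma validD:
  assumes "valid M"
  shows "finite (fst M i)" "0 \<in> fst M i" "snd M h 0 = 0"
    "x \<notin> fst M (s h) \<Longrightarrow> snd M h x = 0"
    "x \<in> fst M (s h) \<Longrightarrow> snd M h x \<in> fst M (t h)"
    "h \<notin> E \<Longrightarrow> snd M h x = 0"
    "x \<in> fst M (s h) \<Longrightarrow> y \<in> fst M (s h) \<Longrightarrow> snd M h x = snd M h y \<Longrightarrow> snd M h x \<noteq> 0 \<Longrightarrow> x = y"
proof -
  have R1: "\<forall>i. finite (fst M i) \<and> 0 \<in> fst M i" and R2: "\<forall>h. h \<notin> E \<longrightarrow> snd M h = (\<lambda>x. 0)"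
    and R3: "\<forall>h\<in>E. snd M h 0 = 0 \<and> snd M h ` fst M (s h) \<subseteq> fst M (t h) \<and>
          inj_on (snd M h) {x \<in> fst M (s h). snd M h x \<noteq> 0} \<and>
          (\<forall>x. x \<notin> fst M (s h) \<longrightarrow> snd M h x = 0)"
    using assms unfolding is_rep_def by blast+
  show "finite (fst M i)" "0 \<in> fst M i" using R1 by blast+
  show "snd M h 0 = 0" using R2 R3 by (cases "h \<in> E") simp_all
  show "h \<notin> E \<Longrightarrow> snd M h x = 0" using R2 by simp
  show "x \<notin> fst M (s h) \<Longrightarrow> snd M h x = 0" using R2 R3 by (cases "h \<in> E") simp_all
  show "snd M h x \<in> fst M (t h)" if x: "x \<in> fst M (s h)"
  proof (cases "h \<in> E")
    case True
    then show ?thesis using R3 x by blast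
  qed (use R1 R2 in simp)
  assume "x \<in> fst M (s h)" "y \<in> fst M (s h)" "snd M h x = snd M h y" "snd M h x \<noteq> 0"
  then show "x = y" using R2 R3 unfolding inj_on_def by (cases "h \<in> E") auto
qed

lemma validI:
  assumes "\<And>i. finite (fst M i)" "\<And>i. 0 \<in> fst M i"
    "\<And>h x. h \<notin> E \<Longrightarrow> snd M h x = 0"
    "\<And>h x. x \<notin> fst M (s h) \<Longrightarrow> snd M h x = 0"
    "\<And>h x. h \<in> E \<Longrightarrow> x \<in> fst M (s h) \<Longrightarrow> snd M h x \<in> fst M (t h)"
    "\<And>h. snd M h 0 = 0"
    "\<And>h x y. h \<in> E \<Longrightarrow> x \<in> fst M (s h) \<Longrightarrow> y \<in> fst M (s h) \<Longrightarrow> snd M h x = snd M h y \<Longrightarrow>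
      snd M h x \<noteq> 0 \<Longrightarrow> x = y"
  shows "valid M"
  unfolding is_rep_def
proof (intro conjI allI ballI impI)
  fix h assume h: "h \<in> E"
  show "snd M h ` fst M (s h) \<subseteq> fst M (t h)" using assms(5) h by blast
  show "inj_on (snd M h) {x \<in> fst M (s h). snd M h x \<noteq> 0}"
    unfolding inj_on_def using assms(7)[OF h] by blast
qed (use assms in auto)

lemma rep_eqI:
  assumes "valid M" "valid N" "fst M = fst N"
    "\<And>h x. h \<in> E \<Longrightarrow> x \<in> fst M (s h) \<Longrightarrow> snd M h x = snd N h x"
  shows "M = N"
proof -
  have "snd M h x = snd N h x" for h x
    using assms validD(4,6)[OF assms(1)] validD(4,6)[OF assms(2)]
    by (cases "h \<in> E"; cases "x \<in> fst M (s h)") auto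
  then have "snd M = snd N" by (intro ext)
  with assms(3) show ?thesis by (simp add: prod_eq_iff)
qed

lemma card_pos: "valid X \<Longrightarrow> card (fst X i) \<ge> 1"
  using validD(1,2) by (metis card_0_eq empty_iff less_one not_le)

lemma valid_zrep: "valid zrep"
  by (rule validI) (auto simp: zrep_def)

lemma zrep_unique: assumes X: "valid X" and c: "\<And>i. card (fst X i) = 1" shows "X = zrep"
proof -
  have fX: "fst X i = {0}" for i
    using c[of i] validD(2)[OF X, of i] by (metis card_1_singletonE singletonD)
  show ?thesis
    by (rule rep_eqI[OF X valid_zrep]) (auto simp: fX zrep_def validD(3)[OF X])
qed

definition iso_map :: "('v \<Rightarrow> nat \<Rightarrow> nat) \<Rightarrow> ('v,'e) rep \<Rightarrow> ('v,'e) rep \<Rightarrow> bool" where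
  "iso_map \<phi> M N \<longleftrightarrow> (\<forall>i. bij_betw (\<phi> i) (fst M i) (fst N i) \<and> \<phi> i 0 = 0) \<and>
     (\<forall>h\<in>E. \<forall>x\<in>fst M (s h). \<phi> (t h) (snd M h x) = snd N h (\<phi> (s h) x))"

lemma iso_iff: "isom M N \<longleftrightarrow> valid M \<and> valid N \<and> (\<exists>\<phi>. iso_map \<phi> M N)"
  unfolding rep_iso_def iso_map_def ..

lemma iso_mapD:
  assumes "iso_map \<phi> M N"
  shows "bij_betw (\<phi> i) (fst M i) (fst N i)" "\<phi> i 0 = 0"
    "h \<in> E \<Longrightarrow> x \<in> fst M (s h) \<Longrightarrow> \<phi> (t h) (snd M h x) = snd N h (\<phi> (s h) x)"
  using assms unfolding iso_map_def by blast+

lemma iso_validD: "isom M N \<Longrightarrow> valid M" "isom M N \<Longrightarrow> valid N"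
  unfolding iso_iff by auto

lemma iso_refl: "valid M \<Longrightarrow> isom M M"
  unfolding iso_iff iso_map_def by (auto intro!: exI[of _ "\<lambda>i x. x"] simp: bij_betw_def)

lemma iso_map_inverse:
  assumes M: "valid M" and \<phi>: "iso_map \<phi> M N"
  shows "iso_map (\<lambda>i. the_inv_into (fst M i) (\<phi> i)) N M"
proof -
  let ?\<psi> = "\<lambda>i. the_inv_into (fst M i) (\<phi> i)"
  note b = iso_mapD(1)[OF \<phi>]
  have b': "bij_betw (?\<psi> i) (fst N i) (fst M i)" for i using b bij_betw_the_inv_into by blast
  have z': "?\<psi> i 0 = 0" for i
    using validD(2)[OF M] iso_mapD(2)[OF \<phi>] b by (metis bij_betw_imp_inj_on the_inv_into_f_f)
  have "?\<psi> (t h) (snd N h y) = snd M h (?\<psi> (s h) y)" if h: "h \<in> E" and y: "y \<in> fst N (s h)" for h y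
  proof -
    let ?x = "?\<psi> (s h) y"
    have x: "?x \<in> fst M (s h)" using b' y by (meson bij_betwE)
    have "\<phi> (s h) ?x = y" using b y by (meson f_the_inv_into_f_bij_betw)
    then have "snd N h y = \<phi> (t h) (snd M h ?x)" using iso_mapD(3)[OF \<phi> h x] by simp
    then show ?thesis
      using the_inv_into_f_f[OF bij_betw_imp_inj_on[OF b] validD(5)[OF M x]] by simp
  qed
  then show ?thesis unfolding iso_map_def using b' z' by blast
qed

lemma iso_sym: "isom M N \<Longrightarrow> isom N M"
  unfolding iso_iff using iso_map_inverse by blast

lemma iso_map_comp:
  assumes \<phi>: "iso_map \<phi> M N" and \<psi>: "iso_map \<psi> N P"
  shows "iso_map (\<lambda>i. \<psi> i \<circ> \<phi> i) M P"
  unfolding iso_map_def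
proof (intro conjI allI ballI)
  fix i
  show "bij_betw (\<psi> i \<circ> \<phi> i) (fst M i) (fst P i)" using iso_mapD(1) \<phi> \<psi> bij_betw_trans by blast
  show "(\<psi> i \<circ> \<phi> i) 0 = 0" using iso_mapD(2)[OF \<phi>] iso_mapD(2)[OF \<psi>] by simp
next
  fix h x assume h: "h \<in> E" and x: "x \<in> fst M (s h)"
  have "\<phi> (s h) x \<in> fst N (s h)" using iso_mapD(1)[OF \<phi>] x by (meson bij_betwE)
  then show "(\<psi> (t h) \<circ> \<phi> (t h)) (snd M h x) = snd P h ((\<psi> (s h) \<circ> \<phi> (s h)) x)"
    using iso_mapD(3)[OF \<phi> h x] iso_mapD(3)[OF \<psi> h] by simp
qed

lemma iso_trans: "isom M N \<Longrightarrow> isom N P \<Longrightarrow> isom M P"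
  unfolding iso_iff using iso_map_comp by blast

lemma iso_card: "isom M N \<Longrightarrow> card (fst M i) = card (fst N i)"
  unfolding iso_iff using iso_mapD(1) bij_betw_same_card by blast

lemma dimv_iso: assumes "isom X Y" shows "dimv X = dimv Y"
  unfolding dimv_def using iso_card[OF assms] by simp

lemma iso_zrep_iff: assumes "valid X" shows "isom X zrep \<longleftrightarrow> X = zrep"
proof
  assume "isom X zrep"
  then have "card (fst X i) = 1" for i using iso_card[of X zrep i] by (simp add: zrep_def)
  then show "X = zrep" using zrep_unique assms by blast
qed (simp add: iso_refl valid_zrep)

section \<open>Canonical representatives\<close>

lemma canon_iso: "valid M \<Longrightarrow> isom M (cls M)"
  unfolding canon_def by (rule someI[of _ M]) (rule iso_refl)

lemma canon_eq: assumes "isom M N" shows "cls M = cls N"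
proof -
  have "isom M X \<longleftrightarrow> isom N X" for X
    using iso_sym[OF assms] iso_trans[of M N X] iso_trans[of N M X] assms by blast
  then have "isom M = isom N" by (rule ext)
  then show ?thesis unfolding canon_def by simp
qed

lemma canon_eq_iff: assumes "valid M" "valid N" shows "cls M = cls N \<longleftrightarrow> isom M N"
proof
  assume "cls M = cls N"
  then have "isom M (cls N)" using canon_iso[OF assms(1)] by simp
  then show "isom M N" using iso_trans iso_sym canon_iso[OF assms(2)] by blast
qed (rule canon_eq)

lemma Classes_valid: "X \<in> Classes \<Longrightarrow> valid X"
  unfolding IsoQ_def using canon_iso iso_validD(2) by blast

lemma canon_Classes: "valid M \<Longrightarrow> cls M \<in> Classes"
  unfolding IsoQ_def by blast

lemma canon_idem: assumes "X \<in> Classes" shows "cls X = X"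
proof -
  obtain M where M: "valid M" "X = cls M" using assms unfolding IsoQ_def by blast
  then have "isom X M" using canon_iso iso_sym by blast
  then show ?thesis using canon_eq M(2) by simp
qed

lemma canon_zrep: "cls zrep = zrep"
proof -
  have "isom (cls zrep) zrep" using iso_sym[OF canon_iso[OF valid_zrep]] .
  then show ?thesis using iso_zrep_iff iso_validD(1) by blast
qed

lemma zrep_Classes: "zrep \<in> Classes"
  using canon_Classes[OF valid_zrep] canon_zrep by simp

lemma canon_eq_zrep: "valid X \<Longrightarrow> cls X = zrep \<longleftrightarrow> X = zrep"
  using canon_eq_iff[OF _ valid_zrep, of X] iso_zrep_iff[of X] by (simp add: canon_zrep)

lemma dimv_canon: "valid X \<Longrightarrow> dimv (cls X) = dimv X"
  using dimv_iso[OF canon_iso] by simp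

lemma card_canon: "valid X \<Longrightarrow> card (fst (cls X) i) = card (fst X i)"
  using iso_card[OF canon_iso] by simp

section \<open>Subrepresentations and quotients\<close>

lemma subrepsD:
  assumes "L \<in> subreps E s t M"
  shows "0 \<in> L i" "L i \<subseteq> fst M i" "h \<in> E \<Longrightarrow> x \<in> L (s h) \<Longrightarrow> snd M h x \<in> L (t h)"
  using assms unfolding subreps_def by blast+

lemma subrepsI:
  "(\<And>i. 0 \<in> L i) \<Longrightarrow> (\<And>i. L i \<subseteq> fst M i) \<Longrightarrow>
   (\<And>h x. h \<in> E \<Longrightarrow> x \<in> L (s h) \<Longrightarrow> snd M h x \<in> L (t h)) \<Longrightarrow> L \<in> subreps E s t M"
  unfolding subreps_def by blast

lemma valid_subrep: assumes M: "valid M" and L: "L \<in> subreps E s t M" shows "valid (subrep s M L)"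
proof (rule validI)
  fix i show "finite (fst (subrep s M L) i)"
    using finite_subset[OF subrepsD(2)[OF L] validD(1)[OF M]] by (simp add: subrep_def)
next
  fix h x y assume "h \<in> E" "x \<in> fst (subrep s M L) (s h)" "y \<in> fst (subrep s M L) (s h)"
    "snd (subrep s M L) h x = snd (subrep s M L) h y" "snd (subrep s M L) h x \<noteq> 0"
  then show "x = y" using validD(7)[OF M, of x h y] subrepsD(2)[OF L] by (auto simp: subrep_def)
qed (use subrepsD[OF L] validD(3,6)[OF M] in \<open>auto simp: subrep_def\<close>)

lemma valid_quot: assumes M: "valid M" and L: "L \<in> subreps E s t M" shows "valid (quot E s t M L)"
proof (rule validI)
  fix h x y assume "h \<in> E" "x \<in> fst (quot E s t M L) (s h)" "y \<in> fst (quot E s t M L) (s h)"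
    "snd (quot E s t M L) h x = snd (quot E s t M L) h y" "snd (quot E s t M L) h x \<noteq> 0"
  then show "x = y" using validD(7)[OF M, of x h y] by (auto simp: quot_def split: if_splits)
qed (use subrepsD[OF L] validD(1,5,6)[OF M] in \<open>auto simp: quot_def\<close>)

text \<open>A representation has only finitely many subrepresentations, so the product is a finite sum.\<close>

lemma subreps_finite: assumes M: "valid M" shows "finite (subreps E s t M)"
proof -
  let ?B = "Pow (\<Union>i. fst M i)"
  have "subreps E s t M \<subseteq> {f. \<forall>x. (x \<in> UNIV \<longrightarrow> f x \<in> ?B) \<and> (x \<notin> UNIV \<longrightarrow> f x = {})}"
    unfolding subreps_def by blast
  moreover have "finite {f :: 'v \<Rightarrow> nat set. \<forall>x. (x \<in> UNIV \<longrightarrow> f x \<in> ?B) \<and> (x \<notin> UNIV \<longrightarrow> f x = {})}"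
    by (rule finite_set_of_finite_funs) (use validD(1)[OF M] in auto)
  ultimately show ?thesis by (rule finite_subset)
qed

text \<open>Counting: |M/L| + |L| = |M| + 1 at every vertex (the base point is shared).\<close>

lemma card_quot: assumes M: "valid M" and L: "L \<in> subreps E s t M"
  shows "card (fst (quot E s t M L) i) + card (L i) = card (fst M i) + 1"
proof -
  have fM: "finite (fst M i)" using validD(1)[OF M] .
  have LM: "L i \<subseteq> fst M i" and z: "0 \<in> L i" using subrepsD[OF L] by blast+
  have "fst (quot E s t M L) i = insert 0 (fst M i - L i)" unfolding quot_def by auto
  then have "card (fst (quot E s t M L) i) = card (fst M i) - card (L i) + 1"
    using z fM card_Diff_subset[OF finite_subset[OF LM fM] LM] by simp
  then show ?thesis using card_mono[OF fM LM] by simp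
qed

lemma card_subrep: "card (fst (subrep s M L) i) = card (L i)"
  unfolding subrep_def by simp

lemma zero_in_subreps: "valid M \<Longrightarrow> (\<lambda>i. {0}) \<in> subreps E s t M"
  by (rule subrepsI) (auto simp: validD(2,3))

lemma fst_in_subreps: "valid M \<Longrightarrow> fst M \<in> subreps E s t M"
  by (rule subrepsI) (auto simp: validD(2,5))

lemma subreps_zrep: "subreps E s t zrep = {\<lambda>i. {0}}"
proof -
  have "L = (\<lambda>i. {0})" if "L \<in> subreps E s t zrep" for L
    using subrepsD(1,2)[OF that] by (intro ext) (auto simp: zrep_def)
  then show ?thesis using zero_in_subreps[OF valid_zrep] by blast
qed

lemma subrep_full: "valid M \<Longrightarrow> subrep s M (fst M) = M"
  by (rule rep_eqI[OF valid_subrep[OF _ fst_in_subreps]]) (auto simp: subrep_def)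

lemma quot_zero: assumes M: "valid M" shows "quot E s t M (\<lambda>i. {0}) = M"
  by (rule rep_eqI[OF valid_quot[OF M zero_in_subreps[OF M]] M])
    (use validD(2,3)[OF M] in \<open>auto simp: quot_def\<close>)

lemma quot_is_zrep: assumes M: "valid M" and L: "L \<in> subreps E s t M"
  shows "quot E s t M L = zrep \<longleftrightarrow> L = fst M"
proof
  assume "quot E s t M L = zrep"
  then have "fst (quot E s t M L) i = {0}" for i by (simp add: zrep_def)
  then have "fst M i \<subseteq> L i" for i using subrepsD(1)[OF L] unfolding quot_def by auto
  then show "L = fst M" using subrepsD(2)[OF L] by (intro ext) blast
next
  assume "L = fst M"
  then show "quot E s t M L = zrep"
    by (intro zrep_unique[OF valid_quot[OF M L]]) (simp add: quot_def validD(2)[OF M])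
qed

lemma subrep_is_zrep: assumes M: "valid M" and L: "L \<in> subreps E s t M"
  shows "subrep s M L = zrep \<longleftrightarrow> L = (\<lambda>i. {0})"
proof
  assume "L = (\<lambda>i. {0})"
  then show "subrep s M L = zrep"
    by (intro zrep_unique[OF valid_subrep[OF M L]]) (simp add: subrep_def)
qed (simp add: zrep_def subrep_def)

section \<open>Transport along isomorphisms\<close>

lemma transport_subreps_mem:
  assumes \<phi>: "iso_map \<phi> M N" and L: "L \<in> subreps E s t M"
  shows "(\<lambda>i. \<phi> i ` L i) \<in> subreps E s t N"
proof (rule subrepsI)
  fix i show "0 \<in> \<phi> i ` L i" using subrepsD(1)[OF L, of i] iso_mapD(2)[OF \<phi>, of i] by (metis image_eqI)
  show "\<phi> i ` L i \<subseteq> fst N i" using subrepsD(2)[OF L, of i] iso_mapD(1)[OF \<phi>, of i] by (auto dest: bij_betwE)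
next
  fix h x assume h: "h \<in> E" and x: "x \<in> \<phi> (s h) ` L (s h)"
  then obtain y where y: "y \<in> L (s h)" "x = \<phi> (s h) y" by blast
  have "y \<in> fst M (s h)" using subrepsD(2)[OF L] y(1) by blast
  then have "snd N h x = \<phi> (t h) (snd M h y)" using iso_mapD(3)[OF \<phi> h] y(2) by simp
  then show "snd N h x \<in> \<phi> (t h) ` L (t h)" using subrepsD(3)[OF L h y(1)] by blast
qed

lemma transport_subreps:
  assumes M: "valid M" and \<phi>: "iso_map \<phi> M N"
  shows "bij_betw (\<lambda>L i. \<phi> i ` L i) (subreps E s t M) (subreps E s t N)"
proof -
  let ?\<psi> = "\<lambda>i. the_inv_into (fst M i) (\<phi> i)"
  have \<psi>: "iso_map ?\<psi> N M" using iso_map_inverse[OF M \<phi>] .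
  have inj: "inj_on (\<phi> i) (fst M i)" for i using iso_mapD(1)[OF \<phi>] bij_betw_imp_inj_on by blast
  have psi_phi: "?\<psi> i ` \<phi> i ` L i = L i" if LM: "L i \<subseteq> fst M i" for L i
  proof -
    have "?\<psi> i (\<phi> i x) = x" if "x \<in> L i" for x using the_inv_into_f_f[OF inj] LM that by blast
    then show ?thesis by (simp add: image_image cong: image_cong)
  qed
  have phi_psi: "\<phi> i ` ?\<psi> i ` K i = K i" if KN: "K i \<subseteq> fst N i" for K i
  proof -
    have "\<phi> i (?\<psi> i y) = y" if "y \<in> K i" for y
      using f_the_inv_into_f_bij_betw[OF iso_mapD(1)[OF \<phi>]] KN that by blast
    then show ?thesis by (simp add: image_image cong: image_cong)
  qed
  show ?thesis
  proof (rule bij_betw_byWitness[where f' = "\<lambda>K i. ?\<psi> i ` K i"])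
    show "\<forall>L\<in>subreps E s t M. (\<lambda>i. ?\<psi> i ` \<phi> i ` L i) = L"
      by (intro ballI ext psi_phi subrepsD(2))
    show "\<forall>K\<in>subreps E s t N. (\<lambda>i. \<phi> i ` ?\<psi> i ` K i) = K"
      by (intro ballI ext phi_psi subrepsD(2))
    show "(\<lambda>L i. \<phi> i ` L i) ` subreps E s t M \<subseteq> subreps E s t N"
      using transport_subreps_mem[OF \<phi>] by blast
    show "(\<lambda>K i. ?\<psi> i ` K i) ` subreps E s t N \<subseteq> subreps E s t M"
      using transport_subreps_mem[OF \<psi>] by blast
  qed
qed

lemma transport_subrep:
  assumes M: "valid M" and N: "valid N" and \<phi>: "iso_map \<phi> M N" and L: "L \<in> subreps E s t M"
  shows "isom (subrep s M L) (subrep s N (\<lambda>i. \<phi> i ` L i))"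
  unfolding iso_iff iso_map_def
proof (intro conjI exI[of _ \<phi>] allI ballI)
  show "valid (subrep s M L)" "valid (subrep s N (\<lambda>i. \<phi> i ` L i))"
    using valid_subrep[OF M L] valid_subrep[OF N transport_subreps_mem[OF \<phi> L]] .
  fix i
  have "inj_on (\<phi> i) (L i)"
    using inj_on_subset[OF bij_betw_imp_inj_on[OF iso_mapD(1)[OF \<phi>]] subrepsD(2)[OF L]] .
  then show "bij_betw (\<phi> i) (fst (subrep s M L) i) (fst (subrep s N (\<lambda>i. \<phi> i ` L i)) i)"
    unfolding subrep_def by (simp add: inj_on_imp_bij_betw)
  show "\<phi> i 0 = 0" using iso_mapD(2)[OF \<phi>] .
next
  fix h x assume "h \<in> E" "x \<in> fst (subrep s M L) (s h)"
  then show "\<phi> (t h) (snd (subrep s M L) h x) = snd (subrep s N (\<lambda>i. \<phi> i ` L i)) h (\<phi> (s h) x)"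
    using iso_mapD(3)[OF \<phi>] subrepsD(2)[OF L] by (auto simp: subrep_def)
qed

lemma transport_quot:
  assumes M: "valid M" and N: "valid N" and \<phi>: "iso_map \<phi> M N" and L: "L \<in> subreps E s t M"
  shows "isom (quot E s t M L) (quot E s t N (\<lambda>i. \<phi> i ` L i))"
proof -
  have inj: "inj_on (\<phi> i) (fst M i)" and img: "\<phi> i ` fst M i = fst N i" for i
    using iso_mapD(1)[OF \<phi>] unfolding bij_betw_def by auto
  have LM: "L i \<subseteq> fst M i" for i using subrepsD(2)[OF L] .
  have inL: "\<phi> i y \<in> \<phi> i ` L i \<longleftrightarrow> y \<in> L i" if "y \<in> fst M i" for i y
    using inj[of i] LM[of i] that by (auto simp: inj_on_def)
  show ?thesis
    unfolding iso_iff iso_map_def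
  proof (intro conjI exI[of _ \<phi>] allI ballI)
    show "valid (quot E s t M L)" "valid (quot E s t N (\<lambda>i. \<phi> i ` L i))"
      using valid_quot[OF M L] valid_quot[OF N transport_subreps_mem[OF \<phi> L]] .
    fix i
    have "\<phi> i ` (fst M i - L i) = fst N i - \<phi> i ` L i"
      using inj_on_image_set_diff[OF inj[of i] Diff_subset LM[of i]] img[of i] by simp
    then have "\<phi> i ` ((fst M i - L i) \<union> {0}) = (fst N i - \<phi> i ` L i) \<union> {0}"
      using iso_mapD(2)[OF \<phi>, of i] by simp
    moreover have "(fst M i - L i) \<union> {0} \<subseteq> fst M i" using validD(2)[OF M, of i] by blast
    then have "inj_on (\<phi> i) ((fst M i - L i) \<union> {0})" by (rule inj_on_subset[OF inj])
    ultimately show "bij_betw (\<phi> i) (fst (quot E s t M L) i) (fst (quot E s t N (\<lambda>i. \<phi> i ` L i)) i)"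
      unfolding quot_def by (simp add: bij_betw_def)
    show "\<phi> i 0 = 0" using iso_mapD(2)[OF \<phi>] .
  next
    fix h x assume h: "h \<in> E" and x: "x \<in> fst (quot E s t M L) (s h)"
    then have xM: "x \<in> fst M (s h)" unfolding quot_def using validD(2)[OF M] by auto
    have "\<phi> (s h) x \<in> fst N (s h)" using img xM by blast
    then show "\<phi> (t h) (snd (quot E s t M L) h x) = snd (quot E s t N (\<lambda>i. \<phi> i ` L i)) h (\<phi> (s h) x)"
      unfolding quot_def using xM inL[OF xM] inL[OF validD(5)[OF M xM]] iso_mapD(2)[OF \<phi>]
        iso_mapD(3)[OF \<phi> h xM] by auto
  qed
qed

lemma sum_subreps_iso_invariant:
  assumes "isom M N"
  shows "(\<Sum>L\<in>subreps E s t M. G (cls (quot E s t M L)) (cls (subrep s M L)))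
       = (\<Sum>L\<in>subreps E s t N. G (cls (quot E s t N L)) (cls (subrep s N L)))"
proof -
  obtain \<phi> where M: "valid M" and N: "valid N" and \<phi>: "iso_map \<phi> M N"
    using assms unfolding iso_iff by blast
  have "(\<Sum>L\<in>subreps E s t M. G (cls (quot E s t M L)) (cls (subrep s M L)))
     = (\<Sum>L\<in>subreps E s t M. G (cls (quot E s t N (\<lambda>i. \<phi> i ` L i))) (cls (subrep s N (\<lambda>i. \<phi> i ` L i))))"
    using canon_eq[OF transport_quot[OF M N \<phi>]] canon_eq[OF transport_subrep[OF M N \<phi>]] by simp
  also have "\<dots> = (\<Sum>L\<in>subreps E s t N. G (cls (quot E s t N L)) (cls (subrep s N L)))"
    by (rule sum.reindex_bij_betw[OF transport_subreps[OF M \<phi>]])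
  finally show ?thesis .
qed

lemma hmult_canon: assumes "valid Q"
  shows "hmult E s t f g (cls Q) = (\<Sum>K\<in>subreps E s t Q. f (cls (quot E s t Q K)) * g (cls (subrep s Q K)))"
  unfolding hmult_def using canon_Classes[OF assms]
    sum_subreps_iso_invariant[OF iso_sym[OF canon_iso[OF assms]], of "\<lambda>a b. f a * g b"] by simp

section \<open>Associativity of the product\<close>

text \<open>For subrepresentations L \<subseteq> K of M, the image of K in M/L.\<close>

definition quot_part :: "('v \<Rightarrow> nat set) \<Rightarrow> ('v \<Rightarrow> nat set) \<Rightarrow> 'v \<Rightarrow> nat set" where
  "quot_part L K = (\<lambda>i. (K i - L i) \<union> {0})"

lemma quot_quot: assumes "\<And>i. L i \<subseteq> K i" "\<And>i. K i \<subseteq> fst M i" "\<And>i. 0 \<in> L i"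
  shows "quot E s t (quot E s t M L) (quot_part L K) = quot E s t M K"
proof -
  have "fst (quot E s t (quot E s t M L) (quot_part L K)) = fst (quot E s t M K)"
    unfolding quot_def quot_part_def using assms by (intro ext) auto
  moreover have "snd (quot E s t (quot E s t M L) (quot_part L K)) h x = snd (quot E s t M K) h x" for h x
    unfolding quot_def quot_part_def using assms[of "s h"] assms[of "t h"] by auto
  ultimately show ?thesis by (simp add: prod_eq_iff ext)
qed

lemma subrep_quot: assumes "\<And>i. L i \<subseteq> K i" "\<And>i. K i \<subseteq> fst M i" "\<And>i. 0 \<in> L i"
  shows "subrep s (quot E s t M L) (quot_part L K) = quot E s t (subrep s M K) L"
proof -
  have "fst (subrep s (quot E s t M L) (quot_part L K)) = fst (quot E s t (subrep s M K) L)"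
    unfolding quot_def quot_part_def subrep_def using assms by (intro ext) auto
  moreover have "snd (subrep s (quot E s t M L) (quot_part L K)) h x = snd (quot E s t (subrep s M K) L) h x"
    for h x
    unfolding quot_def quot_part_def subrep_def using assms[of "s h"] assms[of "t h"] by auto
  ultimately show ?thesis by (simp add: prod_eq_iff ext)
qed

lemma subrep_subrep: assumes "\<And>i. L i \<subseteq> K i"
  shows "subrep s (subrep s M K) L = subrep s M L"
proof -
  have "snd (subrep s (subrep s M K) L) h x = snd (subrep s M L) h x" for h x
    unfolding subrep_def using assms[of "s h"] by auto
  then show ?thesis by (simp add: prod_eq_iff ext subrep_def)
qed

lemma subreps_subrep: assumes K: "K \<in> subreps E s t M"
  shows "subreps E s t (subrep s M K) = {L \<in> subreps E s t M. \<forall>i. L i \<subseteq> K i}"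
proof (intro set_eqI iffI)
  fix L assume L: "L \<in> subreps E s t (subrep s M K)"
  have LK: "L i \<subseteq> K i" for i using subrepsD(2)[OF L] unfolding subrep_def by simp
  have "L \<in> subreps E s t M"
  proof (rule subrepsI)
    show "L i \<subseteq> fst M i" for i using LK subrepsD(2)[OF K] by blast
    fix h x assume h: "h \<in> E" and x: "x \<in> L (s h)"
    have "x \<in> K (s h)" using x LK by blast
    then show "snd M h x \<in> L (t h)" using subrepsD(3)[OF L h x] by (simp add: subrep_def)
  qed (rule subrepsD(1)[OF L])
  then show "L \<in> {L \<in> subreps E s t M. \<forall>i. L i \<subseteq> K i}" using LK by blast
next
  fix L assume "L \<in> {L \<in> subreps E s t M. \<forall>i. L i \<subseteq> K i}"
  then have L: "L \<in> subreps E s t M" and LK: "\<And>i. L i \<subseteq> K i" by auto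
  show "L \<in> subreps E s t (subrep s M K)"
  proof (rule subrepsI)
    fix h x assume h: "h \<in> E" and x: "x \<in> L (s h)"
    have "x \<in> K (s h)" using x LK by blast
    then show "snd (subrep s M K) h x \<in> L (t h)" using subrepsD(3)[OF L h x] by (simp add: subrep_def)
  qed (use subrepsD(1)[OF L] LK in \<open>auto simp: subrep_def\<close>)
qed

lemma quot_part_subreps:
  assumes L: "L \<in> subreps E s t M" and K: "K \<in> subreps E s t M" and LK: "\<And>i. L i \<subseteq> K i"
  shows "quot_part L K \<in> subreps E s t (quot E s t M L)"
proof (rule subrepsI)
  show "quot_part L K i \<subseteq> fst (quot E s t M L) i" for i
    unfolding quot_part_def quot_def using subrepsD(2)[OF K] by auto
  fix h x assume h: "h \<in> E" and x: "x \<in> quot_part L K (s h)"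
  show "snd (quot E s t M L) h x \<in> quot_part L K (t h)"
  proof (cases "x \<in> fst M (s h) - L (s h) \<and> snd M h x \<notin> L (t h)")
    case True
    then have "x \<in> K (s h)" using x subrepsD(1)[OF L] unfolding quot_part_def by auto
    then show ?thesis using True subrepsD(3)[OF K h] unfolding quot_def quot_part_def by simp
  next
    case False
    then show ?thesis unfolding quot_def quot_part_def snd_conv by (simp only: if_not_P) simp
  qed
qed (simp add: quot_part_def)

lemma lift_subreps:
  assumes M: "valid M" and L: "L \<in> subreps E s t M" and Q: "Q \<in> subreps E s t (quot E s t M L)"
  shows "(\<lambda>i. Q i \<union> L i) \<in> subreps E s t M"
proof (rule subrepsI)
  have Qsub: "Q i \<subseteq> (fst M i - L i) \<union> {0}" for i using subrepsD(2)[OF Q] unfolding quot_def by simp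
  show "Q i \<union> L i \<subseteq> fst M i" for i using Qsub[of i] subrepsD(2)[OF L, of i] validD(2)[OF M, of i] by blast
  fix h x assume h: "h \<in> E" and x: "x \<in> Q (s h) \<union> L (s h)"
  consider "x \<in> L (s h)" | "x = 0" | "x \<in> Q (s h)" "x \<in> fst M (s h) - L (s h)"
    using x Qsub by blast
  then show "snd M h x \<in> Q (t h) \<union> L (t h)"
  proof cases
    case 1 then show ?thesis using subrepsD(3)[OF L h] by blast
  next
    case 2 then show ?thesis using validD(3)[OF M] subrepsD(1)[OF L] by simp
  next
    case 3
    then have "snd (quot E s t M L) h x \<in> Q (t h)" using subrepsD(3)[OF Q h] by blast
    then show ?thesis using 3 unfolding quot_def by (auto split: if_splits)
  qed
qed (use subrepsD(1)[OF L] in blast)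

lemma quot_part_bij: assumes M: "valid M" and L: "L \<in> subreps E s t M"
  shows "bij_betw (quot_part L) {K \<in> subreps E s t M. \<forall>i. L i \<subseteq> K i} (subreps E s t (quot E s t M L))"
proof (rule bij_betw_byWitness[where f' = "\<lambda>Q i. Q i \<union> L i"])
  show "\<forall>K\<in>{K \<in> subreps E s t M. \<forall>i. L i \<subseteq> K i}. (\<lambda>i. quot_part L K i \<union> L i) = K"
    using subrepsD(1)[OF L] unfolding quot_part_def by (auto intro!: ext)
  show "\<forall>Q\<in>subreps E s t (quot E s t M L). quot_part L (\<lambda>i. Q i \<union> L i) = Q"
  proof (intro ballI ext)
    fix Q i assume Q: "Q \<in> subreps E s t (quot E s t M L)"
    have "Q i \<subseteq> (fst M i - L i) \<union> {0}" using subrepsD(2)[OF Q] unfolding quot_def by simp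
    then show "quot_part L (\<lambda>i. Q i \<union> L i) i = Q i"
      using subrepsD(1)[OF Q] unfolding quot_part_def by blast
  qed
  show "quot_part L ` {K \<in> subreps E s t M. \<forall>i. L i \<subseteq> K i} \<subseteq> subreps E s t (quot E s t M L)"
    using quot_part_subreps[OF L] by blast
  show "(\<lambda>Q i. Q i \<union> L i) ` subreps E s t (quot E s t M L) \<subseteq> {K \<in> subreps E s t M. \<forall>i. L i \<subseteq> K i}"
    using lift_subreps[OF M L] by blast
qed

text \<open>Both iterated products expand to sums over flags L \<subseteq> K of subrepresentations of M.\<close>

lemma hmult_at_quot: assumes M: "valid M" and L: "L \<in> subreps E s t M"
  shows "hmult E s t f g (cls (quot E s t M L)) = (\<Sum>K\<in>{K \<in> subreps E s t M. \<forall>i. L i \<subseteq> K i}.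
           f (cls (quot E s t M K)) * g (cls (quot E s t (subrep s M K) L)))"
proof -
  have "hmult E s t f g (cls (quot E s t M L)) = (\<Sum>Q\<in>subreps E s t (quot E s t M L).
      f (cls (quot E s t (quot E s t M L) Q)) * g (cls (subrep s (quot E s t M L) Q)))"
    by (rule hmult_canon[OF valid_quot[OF M L]])
  also have "\<dots> = (\<Sum>K\<in>{K \<in> subreps E s t M. \<forall>i. L i \<subseteq> K i}.
      f (cls (quot E s t (quot E s t M L) (quot_part L K))) * g (cls (subrep s (quot E s t M L) (quot_part L K))))"
    by (rule sum.reindex_bij_betw[OF quot_part_bij[OF M L], symmetric])
  also have "\<dots> = (\<Sum>K\<in>{K \<in> subreps E s t M. \<forall>i. L i \<subseteq> K i}.
      f (cls (quot E s t M K)) * g (cls (quot E s t (subrep s M K) L)))"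
  proof (rule sum.cong[OF refl])
    fix K assume "K \<in> {K \<in> subreps E s t M. \<forall>i. L i \<subseteq> K i}"
    then have "\<And>i. L i \<subseteq> K i" "\<And>i. K i \<subseteq> fst M i" "\<And>i. 0 \<in> L i"
      using subrepsD(1)[OF L] subrepsD(2)[of K M] by auto
    then show "f (cls (quot E s t (quot E s t M L) (quot_part L K))) * g (cls (subrep s (quot E s t M L) (quot_part L K)))
        = f (cls (quot E s t M K)) * g (cls (quot E s t (subrep s M K) L))"
      by (simp add: quot_quot subrep_quot)
  qed
  finally show ?thesis .
qed

lemma hmult_at_subrep: assumes M: "valid M" and K: "K \<in> subreps E s t M"
  shows "hmult E s t g h (cls (subrep s M K)) = (\<Sum>L\<in>{L \<in> subreps E s t M. \<forall>i. L i \<subseteq> K i}.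
           g (cls (quot E s t (subrep s M K) L)) * h (cls (subrep s M L)))"
  unfolding hmult_canon[OF valid_subrep[OF M K]] subreps_subrep[OF K]
  by (rule sum.cong[OF refl]) (simp add: subrep_subrep)

theorem hmult_assoc: "hmult E s t (hmult E s t f g) h = hmult E s t f (hmult E s t g h)"
proof (rule ext)
  fix M
  show "hmult E s t (hmult E s t f g) h M = hmult E s t f (hmult E s t g h) M"
  proof (cases "M \<in> Classes")
    case False then show ?thesis unfolding hmult_def by simp
  next
    case True
    have M: "valid M" using Classes_valid[OF True] .
    let ?S = "subreps E s t M"
    let ?term = "\<lambda>L K. f (cls (quot E s t M K)) * g (cls (quot E s t (subrep s M K) L)) * h (cls (subrep s M L))"
    have "hmult E s t (hmult E s t f g) h M
        = (\<Sum>L\<in>?S. hmult E s t f g (cls (quot E s t M L)) * h (cls (subrep s M L)))"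
      unfolding hmult_def[of E s t "hmult E s t f g" h] using True by simp
    also have "\<dots> = (\<Sum>L\<in>?S. \<Sum>K\<in>{K \<in> ?S. \<forall>i. L i \<subseteq> K i}. ?term L K)"
      by (rule sum.cong[OF refl]) (simp add: hmult_at_quot[OF M] sum_distrib_right)
    also have "\<dots> = (\<Sum>K\<in>?S. \<Sum>L\<in>{L \<in> ?S. \<forall>i. L i \<subseteq> K i}. ?term L K)"
      using sum.swap_restrict[OF subreps_finite[OF M] subreps_finite[OF M]] .
    also have "\<dots> = (\<Sum>K\<in>?S. f (cls (quot E s t M K)) * hmult E s t g h (cls (subrep s M K)))"
      by (rule sum.cong[OF refl]) (simp add: hmult_at_subrep[OF M] sum_distrib_left mult.assoc)
    also have "\<dots> = hmult E s t f (hmult E s t g h) M"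
      unfolding hmult_def[of E s t f "hmult E s t g h"] using True by simp
    finally show ?thesis .
  qed
qed

section \<open>Direct sums\<close>

lemma enc_0[simp]: "enc_l 0 = 0" "enc_r 0 = 0" unfolding enc_l_def enc_r_def by simp_all

lemma enc_eq[simp]: "enc_l a = enc_l b \<longleftrightarrow> a = b" "enc_r a = enc_r b \<longleftrightarrow> a = b"
  "enc_l a = enc_r b \<longleftrightarrow> a = 0 \<and> b = 0" "enc_r b = enc_l a \<longleftrightarrow> a = 0 \<and> b = 0"
  "enc_l a = 0 \<longleftrightarrow> a = 0" "enc_r a = 0 \<longleftrightarrow> a = 0"
  unfolding enc_l_def enc_r_def by presburger+

lemma enc_pos[simp]: "0 < enc_l a \<longleftrightarrow> 0 < a" "0 < enc_r a \<longleftrightarrow> 0 < a"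
  unfolding enc_l_def enc_r_def by presburger+

lemma enc_cases: obtains "x = 0" | a where "a \<noteq> 0" "x = enc_l a" | b where "b \<noteq> 0" "x = enc_r b"
proof -
  consider "x = 0" | "x \<noteq> 0" "even x" | "odd x" by blast
  then show ?thesis
  proof cases
    case 2 then have "x = enc_l (x div 2)" "x div 2 \<noteq> 0" unfolding enc_l_def by auto
    then show ?thesis using that by blast
  next
    case 3 then have "x = enc_r ((x + 1) div 2)" "(x + 1) div 2 \<noteq> 0" unfolding enc_r_def by presburger+
    then show ?thesis using that by blast
  qed (use that in blast)
qed

lemma fst_dsum: "fst (dsum M N) i = enc_l ` fst M i \<union> enc_r ` fst N i"
  unfolding dsum_def by simp

lemma enc_l_div: "a \<noteq> 0 \<Longrightarrow> enc_l a div 2 = a" "a \<noteq> 0 \<Longrightarrow> even (enc_l a)"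
  "b \<noteq> 0 \<Longrightarrow> (enc_r b + 1) div 2 = b" "b \<noteq> 0 \<Longrightarrow> odd (enc_r b)"
  unfolding enc_l_def enc_r_def by presburger+

lemma dsum_l: "valid M \<Longrightarrow> snd (dsum M N) h (enc_l a) = enc_l (snd M h a)"
  by (cases "a = 0") (simp_all add: dsum_def validD(3) enc_l_div)

lemma dsum_r: assumes N: "valid N" shows "snd (dsum M N) h (enc_r b) = enc_r (snd N h b)"
proof (cases "b = 0")
  case True then show ?thesis by (simp add: dsum_def validD(3)[OF N])
next
  case False
  have a: "\<not> enc_r b = 0" using False by simp
  have b: "\<not> even (enc_r b)" using enc_l_div(4)[OF False] .
  show ?thesis unfolding dsum_def snd_conv if_not_P[OF a] if_not_P[OF b] enc_l_div(3)[OF False] ..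
qed

lemma mem_dsum: "0 \<in> A \<Longrightarrow> 0 \<in> B \<Longrightarrow> enc_l a \<in> enc_l ` A \<union> enc_r ` B \<longleftrightarrow> a \<in> A"
  "0 \<in> A \<Longrightarrow> 0 \<in> B \<Longrightarrow> enc_r b \<in> enc_l ` A \<union> enc_r ` B \<longleftrightarrow> b \<in> B"
  by (cases "a = 0"; auto) (cases "b = 0"; auto)

lemma valid_dsum: assumes M: "valid M" and N: "valid N" shows "valid (dsum M N)"
proof (rule validI)
  fix i show "finite (fst (dsum M N) i)" using validD(1)[OF M] validD(1)[OF N] by (simp add: fst_dsum)
  show "0 \<in> fst (dsum M N) i" using validD(2)[OF M] by (simp add: fst_dsum)
next
  fix h show "snd (dsum M N) h 0 = 0" by (simp add: dsum_def)
next
  fix h x assume h: "h \<notin> E"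
  show "snd (dsum M N) h x = 0"
    by (cases x rule: enc_cases) (simp_all add: dsum_l[OF M] dsum_r[OF N] validD(6)[OF M h] validD(6)[OF N h] dsum_def)
next
  fix h x assume x: "x \<notin> fst (dsum M N) (s h)"
  have z: "0 \<in> fst M (s h)" "0 \<in> fst N (s h)" using validD(2) M N by blast+
  show "snd (dsum M N) h x = 0"
  proof (cases x rule: enc_cases)
    case 1 then show ?thesis by (simp add: dsum_def)
  next
    case (2 a) then have "a \<notin> fst M (s h)" using x unfolding fst_dsum by blast
    then show ?thesis using 2 by (simp add: dsum_l[OF M] validD(4)[OF M])
  next
    case (3 b) then have "b \<notin> fst N (s h)" using x unfolding fst_dsum by blast
    then show ?thesis using 3 by (simp add: dsum_r[OF N] validD(4)[OF N])
  qed
next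
  fix h x assume h: "h \<in> E" and x: "x \<in> fst (dsum M N) (s h)"
  from x show "snd (dsum M N) h x \<in> fst (dsum M N) (t h)"
    unfolding fst_dsum by (auto simp add: dsum_l[OF M] dsum_r[OF N] validD(5)[OF M] validD(5)[OF N])
next
  fix h x y assume h: "h \<in> E" and x: "x \<in> fst (dsum M N) (s h)" and y: "y \<in> fst (dsum M N) (s h)"
    and eq: "snd (dsum M N) h x = snd (dsum M N) h y" and nz: "snd (dsum M N) h x \<noteq> 0"
  from x obtain a b where xa: "(a \<in> fst M (s h) \<and> x = enc_l a) \<or> (b \<in> fst N (s h) \<and> x = enc_r b)"
    unfolding fst_dsum by blast
  from y obtain a' b' where ya: "(a' \<in> fst M (s h) \<and> y = enc_l a') \<or> (b' \<in> fst N (s h) \<and> y = enc_r b')"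
    unfolding fst_dsum by blast
  show "x = y"
    using xa ya eq nz validD(7)[OF M, of _ h] validD(7)[OF N, of _ h]
    by (auto simp: dsum_l[OF M] dsum_r[OF N])
qed


definition dsum_join :: "('v \<Rightarrow> nat \<Rightarrow> nat) \<Rightarrow> ('v \<Rightarrow> nat \<Rightarrow> nat) \<Rightarrow> 'v \<Rightarrow> nat \<Rightarrow> nat" where
  "dsum_join \<alpha> \<beta> i x = (if even x then \<alpha> i (x div 2) else \<beta> i ((x + 1) div 2))"

lemma dsum_join_l: "\<alpha> i 0 = 0 \<Longrightarrow> dsum_join \<alpha> \<beta> i (enc_l a) = \<alpha> i a"
  by (cases "a = 0") (simp_all add: dsum_join_def enc_l_div)

lemma dsum_join_r: assumes "\<alpha> i 0 = 0" "\<beta> i 0 = 0" shows "dsum_join \<alpha> \<beta> i (enc_r b) = \<beta> i b"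
proof (cases "b = 0")
  case False
  show ?thesis unfolding dsum_join_def if_not_P[OF enc_l_div(4)[OF False]] enc_l_div(3)[OF False] ..
qed (simp add: dsum_join_def assms)

lemma inj_on_dsum_join:
  assumes ia: "inj_on (\<alpha> i) A" and ib: "inj_on (\<beta> i) B" and A0: "0 \<in> A" and B0: "0 \<in> B"
    and za: "\<alpha> i 0 = 0" and zb: "\<beta> i 0 = 0" and disj: "\<alpha> i ` A \<inter> \<beta> i ` B \<subseteq> {0}"
  shows "inj_on (dsum_join \<alpha> \<beta> i) (enc_l ` A \<union> enc_r ` B)"
proof -
  have only_zero: "a = 0 \<and> b = 0" if a: "a \<in> A" and b: "b \<in> B" and e: "\<alpha> i a = \<beta> i b" for a b
  proof -
    have "\<alpha> i a \<in> \<alpha> i ` A \<inter> \<beta> i ` B" using a b e by blast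
    then have "\<alpha> i a = \<alpha> i 0" "\<beta> i b = \<beta> i 0" using disj za zb e by auto
    then show ?thesis using inj_onD[OF ia _ a A0] inj_onD[OF ib _ b B0] by blast
  qed
  have jl: "dsum_join \<alpha> \<beta> i (enc_l a) = \<alpha> i a" and jr: "dsum_join \<alpha> \<beta> i (enc_r b) = \<beta> i b" for a b
    using dsum_join_l[where \<alpha>=\<alpha> and \<beta>=\<beta>, OF za] dsum_join_r[where \<alpha>=\<alpha> and \<beta>=\<beta>, OF za zb] by blast+
  show ?thesis
  proof (rule inj_onI)
    fix x y assume x: "x \<in> enc_l ` A \<union> enc_r ` B" and y: "y \<in> enc_l ` A \<union> enc_r ` B"
      and eq: "dsum_join \<alpha> \<beta> i x = dsum_join \<alpha> \<beta> i y"
    from x y show "x = y"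
    proof (elim UnE imageE)
      fix a a' assume "a \<in> A" "x = enc_l a" "a' \<in> A" "y = enc_l a'"
      then show "x = y" using eq inj_onD[OF ia] by (simp add: jl)
    next
      fix a b assume "a \<in> A" "x = enc_l a" "b \<in> B" "y = enc_r b"
      then show "x = y" using eq only_zero by (simp add: jl jr)
    next
      fix b a assume "b \<in> B" "x = enc_r b" "a \<in> A" "y = enc_l a"
      then show "x = y" using eq only_zero by (simp add: jl jr)
    next
      fix b b' assume "b \<in> B" "x = enc_r b" "b' \<in> B" "y = enc_r b'"
      then show "x = y" using eq inj_onD[OF ib] by (simp add: jr)
    qed
  qed
qed

lemma iso_dsum_decomp:
  assumes A: "valid A" and B: "valid B" and X: "valid X"
    and ia: "\<And>i. inj_on (\<alpha> i) (fst A i)" and ib: "\<And>i. inj_on (\<beta> i) (fst B i)"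
    and za: "\<And>i. \<alpha> i 0 = 0" and zb: "\<And>i. \<beta> i 0 = 0"
    and fX: "\<And>i. fst X i = \<alpha> i ` fst A i \<union> \<beta> i ` fst B i"
    and disj: "\<And>i. \<alpha> i ` fst A i \<inter> \<beta> i ` fst B i \<subseteq> {0}"
    and ca: "\<And>h a. h \<in> E \<Longrightarrow> a \<in> fst A (s h) \<Longrightarrow> \<alpha> (t h) (snd A h a) = snd X h (\<alpha> (s h) a)"
    and cb: "\<And>h b. h \<in> E \<Longrightarrow> b \<in> fst B (s h) \<Longrightarrow> \<beta> (t h) (snd B h b) = snd X h (\<beta> (s h) b)"
  shows "isom (dsum A B) X"
  unfolding iso_iff iso_map_def
proof (intro conjI exI[of _ "dsum_join \<alpha> \<beta>"] allI ballI)
  note jl = dsum_join_l[where \<alpha>=\<alpha> and \<beta>=\<beta>, OF za] and jr = dsum_join_r[where \<alpha>=\<alpha> and \<beta>=\<beta>, OF za zb]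
  show "valid (dsum A B)" "valid X" using valid_dsum[OF A B] X .
  fix i
  have "dsum_join \<alpha> \<beta> i ` fst (dsum A B) i = fst X i"
    unfolding fst_dsum fX image_Un image_image jl jr ..
  then show "bij_betw (dsum_join \<alpha> \<beta> i) (fst (dsum A B) i) (fst X i)"
    unfolding bij_betw_def fst_dsum
    using inj_on_dsum_join[where \<alpha>=\<alpha> and \<beta>=\<beta> and i=i, OF ia[of i] ib[of i] validD(2)[OF A] validD(2)[OF B] za[of i] zb[of i] disj[of i]] by (simp add: fst_dsum)
  show "dsum_join \<alpha> \<beta> i 0 = 0" using jl[of i 0] za by simp
next
  note jl = dsum_join_l[where \<alpha>=\<alpha> and \<beta>=\<beta>, OF za] and jr = dsum_join_r[where \<alpha>=\<alpha> and \<beta>=\<beta>, OF za zb]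
  fix h x assume h: "h \<in> E" and x: "x \<in> fst (dsum A B) (s h)"
  then show "dsum_join \<alpha> \<beta> (t h) (snd (dsum A B) h x) = snd X h (dsum_join \<alpha> \<beta> (s h) x)"
    unfolding fst_dsum using dsum_l[OF A, of B] dsum_r[OF B, of A] jl jr ca[OF h] cb[OF h] by auto
qed

lemma dsum_cong: assumes "isom A A'" "isom B B'" shows "isom (dsum A B) (dsum A' B')"
proof -
  obtain \<phi> \<psi> where A: "valid A" and A': "valid A'" and \<phi>: "iso_map \<phi> A A'"
    and B: "valid B" and B': "valid B'" and \<psi>: "iso_map \<psi> B B'"
    using assms unfolding iso_iff by blast
  show ?thesis
  proof (rule iso_dsum_decomp[where \<alpha> = "\<lambda>i a. enc_l (\<phi> i a)" and \<beta> = "\<lambda>i b. enc_r (\<psi> i b)"])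
    show "valid (dsum A' B')" using valid_dsum[OF A' B'] .
    fix i
    show "inj_on (\<lambda>a. enc_l (\<phi> i a)) (fst A i)" "inj_on (\<lambda>b. enc_r (\<psi> i b)) (fst B i)"
      using iso_mapD(1)[OF \<phi>, of i] iso_mapD(1)[OF \<psi>, of i] by (simp_all add: bij_betw_def inj_on_def)
    show "enc_l (\<phi> i 0) = 0" "enc_r (\<psi> i 0) = 0" using iso_mapD(2) \<phi> \<psi> by simp_all
    have "\<phi> i ` fst A i = fst A' i" "\<psi> i ` fst B i = fst B' i"
      using iso_mapD(1)[OF \<phi>] iso_mapD(1)[OF \<psi>] by (simp_all add: bij_betw_def)
    then show "fst (dsum A' B') i = (\<lambda>a. enc_l (\<phi> i a)) ` fst A i \<union> (\<lambda>b. enc_r (\<psi> i b)) ` fst B i"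
      unfolding fst_dsum by (simp add: image_image[symmetric])
    show "(\<lambda>a. enc_l (\<phi> i a)) ` fst A i \<inter> (\<lambda>b. enc_r (\<psi> i b)) ` fst B i \<subseteq> {0}" by auto
  next
    fix h a assume "h \<in> E" "a \<in> fst A (s h)"
    then show "enc_l (\<phi> (t h) (snd A h a)) = snd (dsum A' B') h (enc_l (\<phi> (s h) a))"
      using iso_mapD(3)[OF \<phi>] dsum_l[OF A'] by simp
  next
    fix h b assume "h \<in> E" "b \<in> fst B (s h)"
    then show "enc_r (\<psi> (t h) (snd B h b)) = snd (dsum A' B') h (enc_r (\<psi> (s h) b))"
      using iso_mapD(3)[OF \<psi>] dsum_r[OF B'] by simp
  qed (use A B in auto)
qed

lemma dsum_comm: assumes "valid A" "valid B" shows "isom (dsum A B) (dsum B A)"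
proof (rule iso_dsum_decomp[where \<alpha> = "\<lambda>i. enc_r" and \<beta> = "\<lambda>i. enc_l"])
  show "valid (dsum B A)" using valid_dsum assms by blast
  fix i show "fst (dsum B A) i = enc_r ` fst A i \<union> enc_l ` fst B i" unfolding fst_dsum by blast
  show "enc_r ` fst A i \<inter> enc_l ` fst B i \<subseteq> {0}" by auto
qed (use assms dsum_l dsum_r in \<open>auto simp: inj_on_def\<close>)

lemma dsum_zero_r: assumes "valid A" shows "isom (dsum A zrep) A"
proof (rule iso_dsum_decomp[where \<alpha> = "\<lambda>i a. a" and \<beta> = "\<lambda>i b. 0"])
  fix i show "fst A i = (\<lambda>a. a) ` fst A i \<union> (\<lambda>b. 0) ` fst zrep i"
    using validD(2)[OF assms] by (auto simp: zrep_def)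
qed (use assms valid_zrep validD(3)[OF assms] in \<open>auto simp: zrep_def\<close>)

lemma dsum_zero_l: assumes "valid A" shows "isom (dsum zrep A) A"
proof (rule iso_dsum_decomp[where \<alpha> = "\<lambda>i b. 0" and \<beta> = "\<lambda>i a. a"])
  fix i show "fst A i = (\<lambda>b. 0) ` fst zrep i \<union> (\<lambda>a. a) ` fst A i"
    using validD(2)[OF assms] by (auto simp: zrep_def)
qed (use assms valid_zrep validD(3)[OF assms] in \<open>auto simp: zrep_def\<close>)

lemma dsum_assoc: assumes A: "valid A" and B: "valid B" and C: "valid C"
  shows "isom (dsum A (dsum B C)) (dsum (dsum A B) C)"
proof -
  let ?\<beta> = "dsum_join (\<lambda>i b. enc_l (enc_r b)) (\<lambda>i c. enc_r c)"
  have bl: "?\<beta> i (enc_l b) = enc_l (enc_r b)" and br: "?\<beta> i (enc_r c) = enc_r c" for i b c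
    by (simp_all add: dsum_join_l dsum_join_r)
  have AB: "valid (dsum A B)" and BC: "valid (dsum B C)" using valid_dsum assms by blast+
  show ?thesis
  proof (rule iso_dsum_decomp[where \<alpha> = "\<lambda>i a. enc_l (enc_l a)" and \<beta> = ?\<beta>])
    show "valid (dsum (dsum A B) C)" using valid_dsum[OF AB C] .
    fix i
    show "inj_on (\<lambda>a. enc_l (enc_l a)) (fst A i)" by (simp add: inj_on_def)
    show "inj_on (?\<beta> i) (fst (dsum B C) i)"
      unfolding fst_dsum inj_on_def by (auto simp: bl br)
    show "enc_l (enc_l 0) = 0" "?\<beta> i 0 = 0" by (simp_all add: dsum_join_def)
    have "?\<beta> i ` fst (dsum B C) i = enc_l ` enc_r ` fst B i \<union> enc_r ` fst C i"
      unfolding fst_dsum image_Un image_image bl br ..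
    then show "fst (dsum (dsum A B) C) i = (\<lambda>a. enc_l (enc_l a)) ` fst A i \<union> ?\<beta> i ` fst (dsum B C) i"
      unfolding fst_dsum by (simp add: image_Un image_image Un_assoc)
    show "(\<lambda>a. enc_l (enc_l a)) ` fst A i \<inter> ?\<beta> i ` fst (dsum B C) i \<subseteq> {0}"
      unfolding fst_dsum by (auto simp: bl br)
  next
    fix h a assume "h \<in> E" "a \<in> fst A (s h)"
    show "enc_l (enc_l (snd A h a)) = snd (dsum (dsum A B) C) h (enc_l (enc_l a))"
      by (simp add: dsum_l[OF AB] dsum_l[OF A])
  next
    fix h y assume "h \<in> E" "y \<in> fst (dsum B C) (s h)"
    then show "?\<beta> (t h) (snd (dsum B C) h y) = snd (dsum (dsum A B) C) h (?\<beta> (s h) y)"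
      unfolding fst_dsum
      by (auto simp: bl br dsum_l[OF B] dsum_r[OF C] dsum_l[OF AB] dsum_r[OF B])
  qed (use A BC in auto)
qed

lemma card_dsum: assumes A: "valid A" and B: "valid B"
  shows "card (fst (dsum A B) i) + 1 = card (fst A i) + card (fst B i)"
proof -
  have fin: "finite (fst A i)" "finite (fst B i)" using validD(1) A B by blast+
  have "0 \<in> fst A i" "0 \<in> fst B i" using validD(2) A B by blast+
  then have "enc_l ` fst A i \<inter> enc_r ` fst B i = {0}" by force
  moreover have "card (enc_l ` fst A i) = card (fst A i)" "card (enc_r ` fst B i) = card (fst B i)"
    by (simp_all add: card_image inj_on_def)
  ultimately show ?thesis
    using card_Un_Int[of "enc_l ` fst A i" "enc_r ` fst B i"] fin unfolding fst_dsum by simp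
qed

lemma card_le_dsum: assumes "valid A" "valid B"
  shows "card (fst A i) \<le> card (fst (dsum A B) i)" "card (fst B i) \<le> card (fst (dsum A B) i)"
  using card_dsum[OF assms, of i] card_pos[OF assms(1), of i] card_pos[OF assms(2), of i] by linarith+

lemma dsum_is_zrep: assumes A: "valid A" and B: "valid B"
  shows "dsum A B = zrep \<longleftrightarrow> A = zrep \<and> B = zrep"
proof
  assume "dsum A B = zrep"
  then have "card (fst A i) = 1 \<and> card (fst B i) = 1" for i
    using card_dsum[OF A B, of i] card_pos[OF A, of i] card_pos[OF B, of i] by (simp add: zrep_def)
  then show "A = zrep \<and> B = zrep" using zrep_unique A B by blast
next
  assume "A = zrep \<and> B = zrep"
  then show "dsum A B = zrep"
    using zrep_unique[OF valid_dsum[OF A B]] card_dsum[OF A B] by (simp add: zrep_def)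
qed

lemma canon_dsum_canon: assumes "valid X" "valid Y" shows "cls (dsum (cls X) (cls Y)) = cls (dsum X Y)"
  by (rule canon_eq[OF dsum_cong]) (use assms canon_iso iso_sym in blast)+

lemma canon_dsum_assoc: assumes A: "A \<in> Classes" and B: "B \<in> Classes" and C: "C \<in> Classes"
  shows "cls (dsum (cls (dsum A B)) C) = cls (dsum A (cls (dsum B C)))"
proof -
  have vA: "valid A" and vB: "valid B" and vC: "valid C" using A B C Classes_valid by blast+
  have "cls (dsum (cls (dsum A B)) C) = cls (dsum (dsum A B) C)"
    using canon_idem[OF C] canon_dsum_canon[OF valid_dsum[OF vA vB] vC] by simp
  also have "\<dots> = cls (dsum A (dsum B C))"
    using canon_eq[OF iso_sym[OF dsum_assoc[OF vA vB vC]]] .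
  also have "\<dots> = cls (dsum A (cls (dsum B C)))"
    using canon_idem[OF A] canon_dsum_canon[OF vA valid_dsum[OF vB vC]] by simp
  finally show ?thesis .
qed

section \<open>Subrepresentations of a direct sum\<close>

text \<open>The subrepresentation L1 (+) L2 of A (+) B, and the two components of a subrepresentation
  of A (+) B.  Every subrepresentation of A (+) B splits in this way because every arrow of
  A (+) B preserves the two summands.\<close>

definition dsum_sub :: "('v \<Rightarrow> nat set) \<Rightarrow> ('v \<Rightarrow> nat set) \<Rightarrow> 'v \<Rightarrow> nat set" where
  "dsum_sub L1 L2 = (\<lambda>i. enc_l ` L1 i \<union> enc_r ` L2 i)"

definition sub_left :: "('v \<Rightarrow> nat set) \<Rightarrow> 'v \<Rightarrow> nat set" where
  "sub_left L = (\<lambda>i. {a. enc_l a \<in> L i})"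

definition sub_right :: "('v \<Rightarrow> nat set) \<Rightarrow> 'v \<Rightarrow> nat set" where
  "sub_right L = (\<lambda>i. {b. enc_r b \<in> L i})"

lemma dsum_sub_subreps:
  assumes A: "valid A" and B: "valid B" and L1: "L1 \<in> subreps E s t A" and L2: "L2 \<in> subreps E s t B"
  shows "dsum_sub L1 L2 \<in> subreps E s t (dsum A B)"
proof (rule subrepsI)
  fix i show "0 \<in> dsum_sub L1 L2 i" using subrepsD(1)[OF L1] by (simp add: dsum_sub_def)
  show "dsum_sub L1 L2 i \<subseteq> fst (dsum A B) i" using subrepsD(2)[OF L1] subrepsD(2)[OF L2]
    unfolding dsum_sub_def fst_dsum by blast
next
  fix h x assume h: "h \<in> E" and "x \<in> dsum_sub L1 L2 (s h)"
  then show "snd (dsum A B) h x \<in> dsum_sub L1 L2 (t h)"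
    using subrepsD(3)[OF L1 h] subrepsD(3)[OF L2 h] unfolding dsum_sub_def
    by (auto simp: dsum_l[OF A] dsum_r[OF B])
qed

lemma sub_left_subreps: assumes A: "valid A" and B: "valid B" and L: "L \<in> subreps E s t (dsum A B)"
  shows "sub_left L \<in> subreps E s t A"
proof (rule subrepsI)
  fix i show "0 \<in> sub_left L i" using subrepsD(1)[OF L] by (simp add: sub_left_def)
  show "sub_left L i \<subseteq> fst A i"
    using subrepsD(2)[OF L, of i] mem_dsum(1)[OF validD(2)[OF A] validD(2)[OF B]]
    unfolding sub_left_def fst_dsum by blast
next
  fix h x assume h: "h \<in> E" and "x \<in> sub_left L (s h)"
  then show "snd A h x \<in> sub_left L (t h)"
    using subrepsD(3)[OF L h, of "enc_l x"] dsum_l[OF A, of B h x] by (simp add: sub_left_def)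
qed

lemma sub_right_subreps: assumes A: "valid A" and B: "valid B" and L: "L \<in> subreps E s t (dsum A B)"
  shows "sub_right L \<in> subreps E s t B"
proof (rule subrepsI)
  fix i show "0 \<in> sub_right L i" using subrepsD(1)[OF L] by (simp add: sub_right_def)
  show "sub_right L i \<subseteq> fst B i"
    using subrepsD(2)[OF L, of i] mem_dsum(2)[OF validD(2)[OF A] validD(2)[OF B]]
    unfolding sub_right_def fst_dsum by blast
next
  fix h x assume h: "h \<in> E" and "x \<in> sub_right L (s h)"
  then show "snd B h x \<in> sub_right L (t h)"
    using subrepsD(3)[OF L h, of "enc_r x"] dsum_r[OF B, of A h x] by (simp add: sub_right_def)
qed

lemma dsum_sub_bij: assumes A: "valid A" and B: "valid B"
  shows "bij_betw (\<lambda>(L1, L2). dsum_sub L1 L2) (subreps E s t A \<times> subreps E s t B) (subreps E s t (dsum A B))"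
proof (rule bij_betw_byWitness[where f' = "\<lambda>L. (sub_left L, sub_right L)"])
  show "\<forall>p\<in>subreps E s t A \<times> subreps E s t B. (\<lambda>L. (sub_left L, sub_right L)) (case p of (L1, L2) \<Rightarrow> dsum_sub L1 L2) = p"
  proof
    fix p assume "p \<in> subreps E s t A \<times> subreps E s t B"
    then obtain L1 L2 where p: "p = (L1, L2)" and L1: "L1 \<in> subreps E s t A" and L2: "L2 \<in> subreps E s t B"
      by blast
    have "(sub_left (dsum_sub L1 L2), sub_right (dsum_sub L1 L2)) = (L1, L2)"
      unfolding sub_left_def sub_right_def dsum_sub_def
      using mem_dsum[OF subrepsD(1)[OF L1] subrepsD(1)[OF L2]] by auto
    then show "(\<lambda>L. (sub_left L, sub_right L)) (case p of (L1, L2) \<Rightarrow> dsum_sub L1 L2) = p" using p by simp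
  qed
  show "\<forall>L\<in>subreps E s t (dsum A B). (case (sub_left L, sub_right L) of (L1, L2) \<Rightarrow> dsum_sub L1 L2) = L"
  proof (intro ballI ext)
    fix L i assume L: "L \<in> subreps E s t (dsum A B)"
    have "L i \<subseteq> enc_l ` fst A i \<union> enc_r ` fst B i" using subrepsD(2)[OF L, of i] unfolding fst_dsum .
    then show "(case (sub_left L, sub_right L) of (L1, L2) \<Rightarrow> dsum_sub L1 L2) i = L i"
      unfolding dsum_sub_def sub_left_def sub_right_def by auto
  qed
  show "(\<lambda>(L1, L2). dsum_sub L1 L2) ` (subreps E s t A \<times> subreps E s t B) \<subseteq> subreps E s t (dsum A B)"
    using dsum_sub_subreps[OF A B] by auto
  show "(\<lambda>L. (sub_left L, sub_right L)) ` subreps E s t (dsum A B) \<subseteq> subreps E s t A \<times> subreps E s t B"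
    using sub_left_subreps[OF A B] sub_right_subreps[OF A B] by auto
qed

lemma quot_dsum: assumes A: "valid A" and B: "valid B" and L1: "L1 \<in> subreps E s t A" and L2: "L2 \<in> subreps E s t B"
  shows "quot E s t (dsum A B) (dsum_sub L1 L2) = dsum (quot E s t A L1) (quot E s t B L2)"
proof -
  have z: "0 \<in> L1 i" "0 \<in> L2 i" for i using subrepsD(1) L1 L2 by blast+
  have zA: "0 \<in> fst A i" and zB: "0 \<in> fst B i" for i using validD(2) A B by blast+
  have vQ1: "valid (quot E s t A L1)" and vQ2: "valid (quot E s t B L2)" using valid_quot A B L1 L2 by blast+
  have fe: "fst (quot E s t (dsum A B) (dsum_sub L1 L2)) i = fst (dsum (quot E s t A L1) (quot E s t B L2)) i" for i
  proof -
    have "fst (quot E s t (dsum A B) (dsum_sub L1 L2)) i = (enc_l ` fst A i \<union> enc_r ` fst B i - (enc_l ` L1 i \<union> enc_r ` L2 i)) \<union> {0}"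
      unfolding quot_def dsum_sub_def fst_dsum by simp
    also have "\<dots> = enc_l ` ((fst A i - L1 i) \<union> {0}) \<union> enc_r ` ((fst B i - L2 i) \<union> {0})"
      using z[of i] zA[of i] zB[of i] by (auto simp: image_iff)
    finally show ?thesis unfolding fst_dsum quot_def by simp
  qed
  show ?thesis
  proof (rule rep_eqI)
    show "valid (quot E s t (dsum A B) (dsum_sub L1 L2))" using valid_quot[OF valid_dsum[OF A B] dsum_sub_subreps[OF A B L1 L2]] .
    show "valid (dsum (quot E s t A L1) (quot E s t B L2))" using valid_dsum[OF vQ1 vQ2] .
    show "fst (quot E s t (dsum A B) (dsum_sub L1 L2)) = fst (dsum (quot E s t A L1) (quot E s t B L2))"
      using fe by (rule ext)
  next
    fix h x assume h: "h \<in> E" and x: "x \<in> fst (quot E s t (dsum A B) (dsum_sub L1 L2)) (s h)"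
    have m1: "enc_l a \<in> dsum_sub L1 L2 j \<longleftrightarrow> a \<in> L1 j" "enc_r b \<in> dsum_sub L1 L2 j \<longleftrightarrow> b \<in> L2 j" for a b j
      unfolding dsum_sub_def using mem_dsum[OF z] by blast+
    have m2: "enc_l a \<in> fst (dsum A B) j \<longleftrightarrow> a \<in> fst A j" "enc_r b \<in> fst (dsum A B) j \<longleftrightarrow> b \<in> fst B j" for a b j
      unfolding fst_dsum using mem_dsum[OF zA zB] by blast+
    show "snd (quot E s t (dsum A B) (dsum_sub L1 L2)) h x = snd (dsum (quot E s t A L1) (quot E s t B L2)) h x"
    proof (cases x rule: enc_cases)
      case 1 then show ?thesis using validD(3)[OF valid_quot[OF valid_dsum[OF A B] dsum_sub_subreps[OF A B L1 L2]]]
          validD(3)[OF valid_dsum[OF vQ1 vQ2]] by simp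
    next
      case (2 a)
      show ?thesis unfolding 2 dsum_l[OF vQ1] unfolding quot_def snd_conv fst_conv
        using m1 m2 dsum_l[OF A, of B] z by auto
    next
      case (3 b)
      show ?thesis unfolding 3 dsum_r[OF vQ2] unfolding quot_def snd_conv fst_conv
        using m1 m2 dsum_r[OF B, of A] z by auto
    qed
  qed
qed

lemma subrep_dsum: assumes A: "valid A" and B: "valid B" and L1: "L1 \<in> subreps E s t A" and L2: "L2 \<in> subreps E s t B"
  shows "subrep s (dsum A B) (dsum_sub L1 L2) = dsum (subrep s A L1) (subrep s B L2)"
proof -
  have z: "0 \<in> L1 i" "0 \<in> L2 i" for i using subrepsD(1) L1 L2 by blast+
  have vQ1: "valid (subrep s A L1)" and vQ2: "valid (subrep s B L2)" using valid_subrep A B L1 L2 by blast+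
  show ?thesis
  proof (rule rep_eqI)
    show "valid (subrep s (dsum A B) (dsum_sub L1 L2))" using valid_subrep[OF valid_dsum[OF A B] dsum_sub_subreps[OF A B L1 L2]] .
    show "valid (dsum (subrep s A L1) (subrep s B L2))" using valid_dsum[OF vQ1 vQ2] .
    show "fst (subrep s (dsum A B) (dsum_sub L1 L2)) = fst (dsum (subrep s A L1) (subrep s B L2))"
      unfolding subrep_def fst_conv dsum_def dsum_sub_def ..
  next
    fix h x assume h: "h \<in> E" and x: "x \<in> fst (subrep s (dsum A B) (dsum_sub L1 L2)) (s h)"
    have m1: "enc_l a \<in> dsum_sub L1 L2 j \<longleftrightarrow> a \<in> L1 j" "enc_r b \<in> dsum_sub L1 L2 j \<longleftrightarrow> b \<in> L2 j" for a b j
      unfolding dsum_sub_def using mem_dsum[OF z] by blast+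
    show "snd (subrep s (dsum A B) (dsum_sub L1 L2)) h x = snd (dsum (subrep s A L1) (subrep s B L2)) h x"
    proof (cases x rule: enc_cases)
      case 1 then show ?thesis using validD(3)[OF valid_subrep[OF valid_dsum[OF A B] dsum_sub_subreps[OF A B L1 L2]]]
          validD(3)[OF valid_dsum[OF vQ1 vQ2]] by simp
    next
      case (2 a)
      show ?thesis unfolding 2 dsum_l[OF vQ1] unfolding subrep_def snd_conv
        using m1 dsum_l[OF A, of B] by auto
    next
      case (3 b)
      show ?thesis unfolding 3 dsum_r[OF vQ2] unfolding subrep_def snd_conv
        using m1 dsum_r[OF B, of A] by auto
    qed
  qed
qed

text \<open>The main compatibility: Delta(f g) = Delta(f) Delta(g), evaluated at a pair of classes
  (A, B) by splitting the subrepresentations of A (+) B.\<close>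

theorem comult_mult: "hcomult E s t (hmult E s t f g) = hmult2 E s t (hcomult E s t f) (hcomult E s t g)"
proof (rule ext, clarify)
  fix A B
  show "hcomult E s t (hmult E s t f g) (A, B) = hmult2 E s t (hcomult E s t f) (hcomult E s t g) (A, B)"
  proof (cases "A \<in> Classes \<and> B \<in> Classes")
    case False then show ?thesis unfolding hcomult_def hmult2_def by auto
  next
    case True
    then have A: "valid A" and B: "valid B" using Classes_valid by blast+
    let ?D = "dsum A B"
    have vD: "valid ?D" using valid_dsum[OF A B] .
    have "hcomult E s t (hmult E s t f g) (A, B) = hmult E s t f g (cls ?D)"
      unfolding hcomult_def using True by simp
    also have "\<dots> = (\<Sum>L\<in>subreps E s t ?D. f (cls (quot E s t ?D L)) * g (cls (subrep s ?D L)))"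
      by (rule hmult_canon[OF vD])
    also have "\<dots> = (\<Sum>p\<in>subreps E s t A \<times> subreps E s t B.
        (\<lambda>L. f (cls (quot E s t ?D L)) * g (cls (subrep s ?D L))) ((\<lambda>(L1, L2). dsum_sub L1 L2) p))"
      by (rule sum.reindex_bij_betw[OF dsum_sub_bij[OF A B], symmetric])
    also have "\<dots> = (\<Sum>(L1, L2)\<in>subreps E s t A \<times> subreps E s t B.
        f (cls (quot E s t ?D (dsum_sub L1 L2))) * g (cls (subrep s ?D (dsum_sub L1 L2))))"
      by (rule sum.cong[OF refl]) (auto split: prod.split)
    also have "\<dots> = (\<Sum>L1\<in>subreps E s t A. \<Sum>L2\<in>subreps E s t B.
        f (cls (quot E s t ?D (dsum_sub L1 L2))) * g (cls (subrep s ?D (dsum_sub L1 L2))))"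
      by (rule sum.cartesian_product[symmetric])
    also have "\<dots> = hmult2 E s t (hcomult E s t f) (hcomult E s t g) (A, B)"
      unfolding hmult2_def using True
    proof (simp, intro sum.cong refl)
      fix L1 L2 assume L1: "L1 \<in> subreps E s t A" and L2: "L2 \<in> subreps E s t B"
      have q1: "valid (quot E s t A L1)" and q2: "valid (quot E s t B L2)"
        and s1: "valid (subrep s A L1)" and s2: "valid (subrep s B L2)"
        using valid_quot valid_subrep A B L1 L2 by blast+
      show "f (cls (quot E s t ?D (dsum_sub L1 L2))) * g (cls (subrep s ?D (dsum_sub L1 L2))) =
        hcomult E s t f (cls (quot E s t A L1), cls (quot E s t B L2)) *
        hcomult E s t g (cls (subrep s A L1), cls (subrep s B L2))"
        unfolding hcomult_def using canon_Classes[OF q1] canon_Classes[OF q2] canon_Classes[OF s1] canon_Classes[OF s2]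
          canon_dsum_canon[OF q1 q2] canon_dsum_canon[OF s1 s2]
          quot_dsum[OF A B L1 L2] subrep_dsum[OF A B L1 L2] by simp
    qed
    finally show ?thesis .
  qed
qed

section \<open>Finiteness\<close>

definition relabel_rep :: "('v,'e) rep \<Rightarrow> ('v \<Rightarrow> nat \<Rightarrow> nat) \<Rightarrow> ('v,'e) rep" where
  "relabel_rep X \<phi> = (\<lambda>i. \<phi> i ` fst X i, \<lambda>h y. if h \<in> E \<and> y \<in> \<phi> (s h) ` fst X (s h)
      then \<phi> (t h) (snd X h (the_inv_into (fst X (s h)) (\<phi> (s h)) y)) else 0)"

lemma relabel_rep_apply:
  assumes inj: "\<And>i. inj_on (\<phi> i) (fst X i)" and h: "h \<in> E" and x: "x \<in> fst X (s h)"
  shows "snd (relabel_rep X \<phi>) h (\<phi> (s h) x) = \<phi> (t h) (snd X h x)"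
  unfolding relabel_rep_def using h x the_inv_into_f_f[OF inj x] by auto

lemma valid_relabel_rep:
  assumes X: "valid X" and inj: "\<And>i. inj_on (\<phi> i) (fst X i)" and z: "\<And>i. \<phi> i 0 = 0"
  shows "valid (relabel_rep X \<phi>)"
proof (rule validI)
  fix i show "finite (fst (relabel_rep X \<phi>) i)" unfolding relabel_rep_def using validD(1)[OF X] by simp
  show "0 \<in> fst (relabel_rep X \<phi>) i" unfolding relabel_rep_def using validD(2)[OF X] z by (metis fst_conv image_eqI)
next
  fix h x assume "h \<in> E" and "x \<in> fst (relabel_rep X \<phi>) (s h)"
  then show "snd (relabel_rep X \<phi>) h x \<in> fst (relabel_rep X \<phi>) (t h)"
    using relabel_rep_apply[OF inj] validD(5)[OF X] unfolding relabel_rep_def by auto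
next
  fix h show "snd (relabel_rep X \<phi>) h 0 = 0"
    using relabel_rep_apply[OF inj _ validD(2)[OF X], of h] z validD(3)[OF X]
    by (cases "h \<in> E") (simp_all add: relabel_rep_def)
next
  fix h x y assume h: "h \<in> E" and x: "x \<in> fst (relabel_rep X \<phi>) (s h)" and y: "y \<in> fst (relabel_rep X \<phi>) (s h)"
    and eq: "snd (relabel_rep X \<phi>) h x = snd (relabel_rep X \<phi>) h y" and nz: "snd (relabel_rep X \<phi>) h x \<noteq> 0"
  obtain a where a: "a \<in> fst X (s h)" "x = \<phi> (s h) a" using x unfolding relabel_rep_def by auto
  obtain b where b: "b \<in> fst X (s h)" "y = \<phi> (s h) b" using y unfolding relabel_rep_def by auto
  have "\<phi> (t h) (snd X h a) = \<phi> (t h) (snd X h b)"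
    using eq relabel_rep_apply[OF inj h a(1)] relabel_rep_apply[OF inj h b(1)] a b by simp
  then have e: "snd X h a = snd X h b" by (rule inj_onD[OF inj _ validD(5)[OF X a(1)] validD(5)[OF X b(1)]])
  moreover have "snd X h a \<noteq> 0"
  proof
    assume "snd X h a = 0"
    then show False using nz relabel_rep_apply[OF inj h a(1)] a z by simp
  qed
  ultimately show "x = y" using validD(7)[OF X a(1) b(1)] a b by simp
qed (simp_all add: relabel_rep_def)

lemma relabel_rep_iso: assumes X: "valid X" and inj: "\<And>i. inj_on (\<phi> i) (fst X i)" and z: "\<And>i. \<phi> i 0 = 0"
  shows "isom X (relabel_rep X \<phi>)"
  unfolding iso_iff
proof (intro conjI exI[of _ \<phi>])
  show "valid (relabel_rep X \<phi>)" using valid_relabel_rep[OF X inj z] .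
  show "iso_map \<phi> X (relabel_rep X \<phi>)"
    unfolding iso_map_def using relabel_rep_apply[OF inj] z inj
    by (simp add: relabel_rep_def[of X \<phi>, THEN arg_cong[where f = fst]] inj_on_imp_bij_betw)
qed (rule X)

lemma pointed_enumeration:
  assumes fA: "finite A" and A0: "0 \<in> A"
  shows "\<exists>g. bij_betw g A {..<card A} \<and> g 0 = (0::nat)"
proof -
  let ?k = "card (A - {0})"
  obtain h where h: "bij_betw h (A - {0}) {0..<?k}"
    using ex_bij_betw_finite_nat[of "A - {0}"] fA by blast
  define g where "g x = (if x = 0 then 0 else Suc (h x))" for x
  have "bij_betw Suc {0..<?k} (Suc ` {0..<?k})" by (rule inj_on_imp_bij_betw) simp
  then have "bij_betw (Suc \<circ> h) (A - {0}) (Suc ` {0..<?k})" by (rule bij_betw_trans[OF h])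
  then have "bij_betw g (A - {0}) (Suc ` {0..<?k})"
    by (rule bij_betw_cong[THEN iffD1, rotated]) (simp add: g_def)
  moreover have "bij_betw g {0} {0}" by (simp add: g_def)
  ultimately have "bij_betw g ({0} \<union> (A - {0})) ({0} \<union> Suc ` {0..<?k})"
    by (intro bij_betw_combine) auto
  moreover have "{0} \<union> (A - {0}) = A" using A0 by blast
  moreover have "card A = Suc ?k" using card_Suc_Diff1[OF fA A0] by simp
  then have "{0} \<union> Suc ` {0..<?k} = {..<card A}" by (simp add: lessThan_Suc_eq_insert_0 atLeast0LessThan)
  ultimately show ?thesis unfolding g_def by auto
qed

lemma iso_initial_segments: assumes X: "valid X"
  shows "\<exists>Y. isom X Y \<and> (\<forall>i. fst Y i = {..<card (fst X i)})"
proof -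
  have "\<forall>i. \<exists>g. bij_betw g (fst X i) {..<card (fst X i)} \<and> g 0 = 0"
    using pointed_enumeration validD(1,2)[OF X] by blast
  then obtain \<phi> where \<phi>: "\<And>i. bij_betw (\<phi> i) (fst X i) {..<card (fst X i)} \<and> \<phi> i 0 = 0"
    by metis
  have "isom X (relabel_rep X \<phi>)" using relabel_rep_iso[OF X] \<phi> unfolding bij_betw_def by blast
  moreover have "fst (relabel_rep X \<phi>) i = {..<card (fst X i)}" for i
    using \<phi>[of i] unfolding relabel_rep_def bij_betw_def by simp
  ultimately show ?thesis by blast
qed

lemma finite_valid_bounded: assumes fE: "finite E" shows "finite {Y. valid Y \<and> (\<forall>i. fst Y i \<subseteq> {..<n})}"
proof -
  define G where "G = {\<phi>::nat\<Rightarrow>nat. \<forall>x. (x \<in> {..<n} \<longrightarrow> \<phi> x \<in> {..<n}) \<and> (x \<notin> {..<n} \<longrightarrow> \<phi> x = 0)}"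
  define F1 where "F1 = {f::'v \<Rightarrow> nat set. \<forall>x. (x \<in> UNIV \<longrightarrow> f x \<in> Pow {..<n}) \<and> (x \<notin> UNIV \<longrightarrow> f x = {})}"
  define F2 where "F2 = {g::'e \<Rightarrow> nat \<Rightarrow> nat. \<forall>h. (h \<in> E \<longrightarrow> g h \<in> G) \<and> (h \<notin> E \<longrightarrow> g h = (\<lambda>x. 0))}"
  have fG: "finite G" unfolding G_def by (rule finite_set_of_finite_funs) auto
  have f1: "finite F1" unfolding F1_def by (rule finite_set_of_finite_funs) auto
  have f2: "finite F2" unfolding F2_def by (rule finite_set_of_finite_funs[OF fE fG])
  have "{Y. valid Y \<and> (\<forall>i. fst Y i \<subseteq> {..<n})} \<subseteq> F1 \<times> F2"
  proof
    fix Y assume "Y \<in> {Y. valid Y \<and> (\<forall>i. fst Y i \<subseteq> {..<n})}"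
    then have Y: "valid Y" and sub: "\<And>i. fst Y i \<subseteq> {..<n}" by auto
    have "fst Y \<in> F1" unfolding F1_def using sub by auto
    moreover have "snd Y \<in> F2" unfolding F2_def
    proof (intro CollectI allI conjI impI)
      fix h assume "h \<notin> E" then show "snd Y h = (\<lambda>x. 0)" using validD(6)[OF Y] by (intro ext) simp
    next
      fix h assume h: "h \<in> E"
      show "snd Y h \<in> G" unfolding G_def
      proof (intro CollectI allI conjI impI)
        fix x assume x: "x \<in> {..<n}"
        show "snd Y h x \<in> {..<n}"
        proof (cases "x \<in> fst Y (s h)")
          case True then show ?thesis using validD(5)[OF Y True] sub by blast
        next
          case False then have "snd Y h x = 0" using validD(4)[OF Y] by blast
          then show ?thesis using x by simp
        qed
      next
        fix x assume x: "x \<notin> {..<n}"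
        then have "x \<notin> fst Y (s h)" using sub by blast
        then show "snd Y h x = 0" using validD(4)[OF Y] by blast
      qed
    qed
    ultimately show "Y \<in> F1 \<times> F2" by (simp add: mem_Times_iff)
  qed
  then show ?thesis using finite_subset f1 f2 by blast
qed

lemma finite_classes_bounded: assumes fE: "finite E" shows "finite {X \<in> Classes. \<forall>i. card (fst X i) \<le> n}"
proof -
  have "{X \<in> Classes. \<forall>i. card (fst X i) \<le> n} \<subseteq> cls ` {Y. valid Y \<and> (\<forall>i. fst Y i \<subseteq> {..<n})}"
  proof
    fix X assume "X \<in> {X \<in> Classes. \<forall>i. card (fst X i) \<le> n}"
    then have X: "X \<in> Classes" and c: "\<And>i. card (fst X i) \<le> n" by auto
    obtain Y where Y: "isom X Y" "\<And>i. fst Y i = {..<card (fst X i)}" using iso_initial_segments[OF Classes_valid[OF X]] by blast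
    have "valid Y" using iso_validD(2)[OF Y(1)] .
    moreover have "fst Y i \<subseteq> {..<n}" for i using Y(2)[of i] c[of i] by auto
    ultimately have "valid Y \<and> (\<forall>i. fst Y i \<subseteq> {..<n})" by blast
    moreover have "X = cls Y" using canon_eq[OF Y(1)] canon_idem[OF X] by simp
    ultimately show "X \<in> cls ` {Y. valid Y \<and> (\<forall>i. fst Y i \<subseteq> {..<n})}" by blast
  qed
  then show ?thesis by (rule finite_subset) (rule finite_imageI[OF finite_valid_bounded[OF fE]])
qed

lemma card_bound: fixes S :: "('v,'e) rep set" assumes "finite S" shows "\<exists>n. \<forall>X\<in>S. \<forall>i. card (fst X i) \<le> n"
proof -
  have "finite ((\<lambda>(X, i). card (fst X i)) ` (S \<times> (UNIV :: 'v set)))" using assms by simp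
  then obtain n where "\<forall>k\<in>(\<lambda>(X, i). card (fst X i)) ` (S \<times> (UNIV :: 'v set)). k \<le> n"
    using finite_nat_set_iff_bounded_le by blast
  then have "card (fst X i) \<le> n" if "X \<in> S" for X i using that by (metis (mono_tags) SigmaI UNIV_I case_prod_conv image_eqI)
  then show ?thesis by blast
qed


lemma finite_summands:
  assumes fE: "finite E" and fS: "finite S"
  shows "finite {(A, B). A \<in> Classes \<and> B \<in> Classes \<and> cls (dsum A B) \<in> S}"
proof -
  obtain n where n: "\<And>X i. X \<in> S \<Longrightarrow> card (fst X i) \<le> n" using card_bound[OF fS] by blast
  let ?Bd = "{X \<in> Classes. \<forall>i. card (fst X i) \<le> n}"
  have "{(A, B). A \<in> Classes \<and> B \<in> Classes \<and> cls (dsum A B) \<in> S} \<subseteq> ?Bd \<times> ?Bd"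
  proof clarify
    fix A B assume AB: "A \<in> Classes" "B \<in> Classes" and D: "cls (dsum A B) \<in> S"
    have A: "valid A" and B: "valid B" using AB Classes_valid by blast+
    have "card (fst (dsum A B) i) \<le> n" for i
      using card_canon[OF valid_dsum[OF A B], of i] n[OF D, of i] by simp
    then show "A \<in> ?Bd \<and> B \<in> ?Bd" using AB card_le_dsum[OF A B] le_trans by blast
  qed
  then show ?thesis by (rule finite_subset) (simp add: finite_classes_bounded[OF fE])
qed

section \<open>The space H_Q\<close>

lemma HQ_D: "f \<in> HQ E s t \<Longrightarrow> f X \<noteq> 0 \<Longrightarrow> X \<in> Classes" "f \<in> HQ E s t \<Longrightarrow> finite {X. f X \<noteq> 0}"
  unfolding HQ_def by blast+

lemma HQ_I: "(\<And>X. f X \<noteq> 0 \<Longrightarrow> X \<in> Classes) \<Longrightarrow> finite {X. f X \<noteq> 0} \<Longrightarrow> f \<in> HQ E s t"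
  unfolding HQ_def by blast

lemma HQ_pointwise:
  assumes f: "f \<in> HQ E s t" and g: "g \<in> HQ E s t" and F0: "F 0 0 = 0"
  shows "(\<lambda>Y. F (f Y) (g Y)) \<in> HQ E s t"
proof (rule HQ_I)
  fix X assume "F (f X) (g X) \<noteq> 0"
  then have "f X \<noteq> 0 \<or> g X \<noteq> 0" using F0 by auto
  then show "X \<in> Classes" using HQ_D(1)[OF f] HQ_D(1)[OF g] by blast
next
  have "{X. F (f X) (g X) \<noteq> 0} \<subseteq> {X. f X \<noteq> 0} \<union> {X. g X \<noteq> 0}" using F0 by auto
  then show "finite {X. F (f X) (g X) \<noteq> 0}" using HQ_D(2)[OF f] HQ_D(2)[OF g] finite_subset by blast
qed

lemma HQ_zero: "(\<lambda>Y. 0) \<in> HQ E s t"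
  by (rule HQ_I) auto

lemma HQ_sum: assumes "finite J" "\<And>j. j \<in> J \<Longrightarrow> F j \<in> HQ E s t" shows "(\<lambda>Y. \<Sum>j\<in>J. F j Y) \<in> HQ E s t"
  using assms
proof (induction J rule: finite_induct)
  case (insert j J)
  then show ?case using HQ_pointwise[of "F j" "\<lambda>Y. \<Sum>j\<in>J. F j Y" "(+)"] by simp
qed (simp add: HQ_zero)

lemma hbasis_HQ: "X \<in> Classes \<Longrightarrow> hbasis X \<in> HQ E s t"
  unfolding HQ_def hbasis_def by (auto simp: finite_subset[of _ "{X}"])

lemma hmult_nz: assumes "hmult E s t f g M \<noteq> 0"
  obtains L where "M \<in> Classes" "L \<in> subreps E s t M"
    "f (cls (quot E s t M L)) \<noteq> 0" "g (cls (subrep s M L)) \<noteq> 0"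
proof (cases "M \<in> Classes")
  case True
  then have "(\<Sum>L\<in>subreps E s t M. f (cls (quot E s t M L)) * g (cls (subrep s M L))) \<noteq> 0"
    using assms unfolding hmult_def by simp
  then obtain L where "L \<in> subreps E s t M" "f (cls (quot E s t M L)) * g (cls (subrep s M L)) \<noteq> 0"
    by (rule sum.not_neutral_contains_not_neutral)
  then show ?thesis using True that by simp
qed (use assms in \<open>simp add: hmult_def\<close>)

text \<open>Products and coproducts of finitely supported functions are finitely supported: the
  dimension of M, resp. of A (+) B, is bounded by those of the factors.\<close>

theorem hmult_HQ: assumes fE: "finite E" and f: "f \<in> HQ E s t" and g: "g \<in> HQ E s t"
  shows "hmult E s t f g \<in> HQ E s t"
proof (rule HQ_I)
  obtain n where n: "\<And>X i. X \<in> {X. f X \<noteq> 0} \<union> {X. g X \<noteq> 0} \<Longrightarrow> card (fst X i) \<le> n"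
    using card_bound[of "{X. f X \<noteq> 0} \<union> {X. g X \<noteq> 0}"] HQ_D(2)[OF f] HQ_D(2)[OF g] by blast
  have "{M. hmult E s t f g M \<noteq> 0} \<subseteq> {X \<in> Classes. \<forall>i. card (fst X i) \<le> n + n}"
  proof clarify
    fix M assume "hmult E s t f g M \<noteq> 0"
    then obtain L where M: "M \<in> Classes" and L: "L \<in> subreps E s t M"
      and nf: "f (cls (quot E s t M L)) \<noteq> 0" and ng: "g (cls (subrep s M L)) \<noteq> 0"
      by (rule hmult_nz)
    have vM: "valid M" using Classes_valid[OF M] .
    have "card (fst M i) \<le> n + n" for i
    proof -
      have "card (fst (quot E s t M L) i) \<le> n"
        using n[of "cls (quot E s t M L)" i] nf card_canon[OF valid_quot[OF vM L], of i] by simp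
      moreover have "card (L i) \<le> n"
        using n[of "cls (subrep s M L)" i] ng card_canon[OF valid_subrep[OF vM L], of i] card_subrep by simp
      ultimately show ?thesis using card_quot[OF vM L, of i] by linarith
    qed
    then show "M \<in> Classes \<and> (\<forall>i. card (fst M i) \<le> n + n)" using M by blast
  qed
  then show "finite {M. hmult E s t f g M \<noteq> 0}" by (rule finite_subset) (rule finite_classes_bounded[OF fE])
qed (rule hmult_nz)

theorem comult_HQ2: assumes fE: "finite E" and f: "f \<in> HQ E s t"
  shows "hcomult E s t f \<in> HQ2 E s t"
proof -
  have "{p. hcomult E s t f p \<noteq> 0} \<subseteq> {(A, B). A \<in> Classes \<and> B \<in> Classes \<and> cls (dsum A B) \<in> {X. f X \<noteq> 0}}"
    unfolding hcomult_def by (auto split: if_splits)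
  then have "finite {p. hcomult E s t f p \<noteq> 0}"
    by (rule finite_subset) (rule finite_summands[OF fE HQ_D(2)[OF f]])
  moreover have "\<forall>A B. hcomult E s t f (A, B) \<noteq> 0 \<longrightarrow> A \<in> Classes \<and> B \<in> Classes"
    unfolding hcomult_def by auto
  ultimately show ?thesis unfolding HQ2_def by blast
qed

section \<open>Unit and counit\<close>

text \<open>The unit is the class of the zero representation; multiplying by it picks out the
  trivial quotient, resp. the trivial subrepresentation.\<close>

lemma hunit_eq: "hunit E s t = hbasis zrep"
  unfolding hunit_def canon_zrep ..

lemma hunit_HQ: "hunit E s t \<in> HQ E s t"
  unfolding hunit_eq using hbasis_HQ[OF zrep_Classes] .

lemma hmult_unit_l: assumes f: "f \<in> HQ E s t" shows "hmult E s t (hunit E s t) f = f"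
proof (rule ext)
  fix M show "hmult E s t (hunit E s t) f M = f M"
  proof (cases "M \<in> Classes")
    case False
    have "f M = 0" using HQ_D(1)[OF f, of M] False by blast
    then show ?thesis unfolding hmult_def using False by simp
  next
    case True
    have vM: "valid M" using Classes_valid[OF True] .
    have "hmult E s t (hunit E s t) f M = (\<Sum>L\<in>subreps E s t M. if L = fst M then f M else 0)"
      unfolding hmult_def hunit_eq using True
    proof (simp, intro sum.cong refl)
      fix L assume L: "L \<in> subreps E s t M"
      have "cls (quot E s t M L) = zrep \<longleftrightarrow> L = fst M"
        using canon_eq_zrep[OF valid_quot[OF vM L]] quot_is_zrep[OF vM L] by simp
      then show "hbasis zrep (cls (quot E s t M L)) * f (cls (subrep s M L)) = (if L = fst M then f M else 0)"
        using subrep_full[OF vM] canon_idem[OF True] by (auto simp: hbasis_def)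
    qed
    also have "\<dots> = f M" using fst_in_subreps[OF vM] subreps_finite[OF vM] by simp
    finally show ?thesis .
  qed
qed

lemma hmult_unit_r: assumes f: "f \<in> HQ E s t" shows "hmult E s t f (hunit E s t) = f"
proof (rule ext)
  fix M show "hmult E s t f (hunit E s t) M = f M"
  proof (cases "M \<in> Classes")
    case False
    have "f M = 0" using HQ_D(1)[OF f, of M] False by blast
    then show ?thesis unfolding hmult_def using False by simp
  next
    case True
    have vM: "valid M" using Classes_valid[OF True] .
    have "hmult E s t f (hunit E s t) M = (\<Sum>L\<in>subreps E s t M. if L = (\<lambda>i. {0}) then f M else 0)"
      unfolding hmult_def hunit_eq using True
    proof (simp, intro sum.cong refl)
      fix L assume L: "L \<in> subreps E s t M"
      have "cls (subrep s M L) = zrep \<longleftrightarrow> L = (\<lambda>i. {0})"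
        using canon_eq_zrep[OF valid_subrep[OF vM L]] subrep_is_zrep[OF vM L] by simp
      then show "f (cls (quot E s t M L)) * hbasis zrep (cls (subrep s M L)) = (if L = (\<lambda>i. {0}) then f M else 0)"
        using quot_zero[OF vM] canon_idem[OF True] by (auto simp: hbasis_def)
    qed
    also have "\<dots> = f M" using zero_in_subreps[OF vM] subreps_finite[OF vM] by simp
    finally show ?thesis .
  qed
qed

text \<open>The counit evaluates at the zero class; it is multiplicative since the zero
  representation has only one subrepresentation.\<close>

lemma hcounit_mult: "hcounit E s t (hmult E s t f g) = hcounit E s t f * hcounit E s t g"
proof -
  have q: "quot E s t zrep (\<lambda>i. {0}) = zrep" using quot_zero[OF valid_zrep] .
  have r: "subrep s zrep (\<lambda>i. {0}) = zrep" using subrep_is_zrep[OF valid_zrep zero_in_subreps[OF valid_zrep]] by simp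
  show ?thesis unfolding hcounit_def canon_zrep hmult_def using zrep_Classes
    by (simp add: subreps_zrep q r canon_zrep)
qed

section \<open>The coalgebra structure\<close>

text \<open>Coassociativity, counitality and cocommutativity of Delta follow from the corresponding
  properties of the direct sum up to isomorphism.\<close>

lemma comult_unit: "hcomult E s t (hunit E s t) (A, B) = hunit E s t A * hunit E s t B"
proof (cases "A \<in> Classes \<and> B \<in> Classes")
  case True
  then have A: "valid A" and B: "valid B" using Classes_valid by blast+
  have "cls (dsum A B) = zrep \<longleftrightarrow> A = zrep \<and> B = zrep"
    using canon_eq_zrep[OF valid_dsum[OF A B]] dsum_is_zrep[OF A B] by simp
  then show ?thesis unfolding hcomult_def hunit_eq using True by (auto simp: hbasis_def)
next
  case False
  then have "A \<noteq> zrep \<or> B \<noteq> zrep" using zrep_Classes by blast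
  then show ?thesis using False unfolding hcomult_def hunit_eq hbasis_def by auto
qed

lemma coassoc: assumes A: "A \<in> Classes" and B: "B \<in> Classes" and C: "C \<in> Classes"
  shows "hcomult E s t f (cls (dsum A B), C) = hcomult E s t f (A, cls (dsum B C))"
  using canon_dsum_assoc[OF A B C] A C canon_Classes[OF valid_dsum] Classes_valid[OF A]
    Classes_valid[OF B] Classes_valid[OF C]
  by (simp add: hcomult_def)

lemma counit_comult: assumes f: "f \<in> HQ E s t"
  shows "hcomult E s t f (cls zrep, B) = f B" "hcomult E s t f (B, cls zrep) = f B"
proof -
  have "hcomult E s t f (zrep, B) = f B \<and> hcomult E s t f (B, zrep) = f B"
  proof (cases "B \<in> Classes")
    case True
    have B: "valid B" using Classes_valid[OF True] .
    have "cls (dsum zrep B) = B" using canon_eq[OF dsum_zero_l[OF B]] canon_idem[OF True] by simp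
    moreover have "cls (dsum B zrep) = B" using canon_eq[OF dsum_zero_r[OF B]] canon_idem[OF True] by simp
    ultimately show ?thesis unfolding hcomult_def using True zrep_Classes by simp
  next
    case False
    then have "f B = 0" using HQ_D(1)[OF f] by blast
    then show ?thesis unfolding hcomult_def using False by simp
  qed
  then show "hcomult E s t f (cls zrep, B) = f B" "hcomult E s t f (B, cls zrep) = f B"
    unfolding canon_zrep by blast+
qed

lemma cocomm: "hcomult E s t f (A, B) = hcomult E s t f (B, A)"
proof (cases "A \<in> Classes \<and> B \<in> Classes")
  case True
  then have A: "valid A" and B: "valid B" using Classes_valid by blast+
  show ?thesis unfolding hcomult_def using True canon_eq[OF dsum_comm[OF A B]] by simp
next
  case False then show ?thesis unfolding hcomult_def by auto
qed

section \<open>Grading and connectedness\<close>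

lemma dimv_quot: assumes M: "valid M" and L: "L \<in> subreps E s t M"
  shows "dimv M i = dimv (quot E s t M L) i + dimv (subrep s M L) i"
  using card_quot[OF M L, of i] card_pos[OF valid_quot[OF M L], of i] card_pos[OF valid_subrep[OF M L], of i]
  unfolding dimv_def card_subrep by linarith

lemma dimv_dsum: assumes A: "valid A" and B: "valid B"
  shows "dimv (dsum A B) i = dimv A i + dimv B i"
  using card_dsum[OF A B, of i] card_pos[OF A, of i] card_pos[OF B, of i] unfolding dimv_def by linarith

lemma dimv_zero: assumes X: "valid X" and d: "dimv X = (\<lambda>i. 0)" shows "X = zrep"
proof (rule zrep_unique[OF X])
  fix i show "card (fst X i) = 1" using fun_cong[OF d, of i] card_pos[OF X, of i] unfolding dimv_def by simp
qed

lemma Hdeg_D: "f \<in> Hdeg E s t d \<Longrightarrow> f X \<noteq> 0 \<Longrightarrow> dimv X = d" "f \<in> Hdeg E s t d \<Longrightarrow> f \<in> HQ E s t"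
  unfolding Hdeg_def by blast+

theorem Hdeg_mult: assumes fE: "finite E" and f: "f \<in> Hdeg E s t d" and g: "g \<in> Hdeg E s t e"
  shows "hmult E s t f g \<in> Hdeg E s t (\<lambda>i. d i + e i)"
proof -
  have "dimv M = (\<lambda>i. d i + e i)" if nz: "hmult E s t f g M \<noteq> 0" for M
  proof -
    obtain L where M: "M \<in> Classes" and L: "L \<in> subreps E s t M"
      and nf: "f (cls (quot E s t M L)) \<noteq> 0" and ng: "g (cls (subrep s M L)) \<noteq> 0"
      using hmult_nz[OF nz] by blast
    have vM: "valid M" using Classes_valid[OF M] .
    have "dimv (quot E s t M L) = d" "dimv (subrep s M L) = e"
      using Hdeg_D(1)[OF f nf] Hdeg_D(1)[OF g ng]
        dimv_canon[OF valid_quot[OF vM L]] dimv_canon[OF valid_subrep[OF vM L]] by simp_all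
    then show ?thesis using dimv_quot[OF vM L] by auto
  qed
  then show ?thesis unfolding Hdeg_def using hmult_HQ[OF fE Hdeg_D(2)[OF f] Hdeg_D(2)[OF g]] by blast
qed

lemma Hdeg_comult: assumes f: "f \<in> Hdeg E s t d" and nz: "hcomult E s t f (A, B) \<noteq> 0"
  shows "(\<lambda>i. dimv A i + dimv B i) = d"
proof -
  have AB: "A \<in> Classes" "B \<in> Classes" and fd: "f (cls (dsum A B)) \<noteq> 0"
    using nz unfolding hcomult_def by (auto split: if_splits)
  have A: "valid A" and B: "valid B" using AB Classes_valid by blast+
  have "dimv (dsum A B) = d" using Hdeg_D(1)[OF f fd] dimv_canon[OF valid_dsum[OF A B]] by simp
  then show ?thesis using dimv_dsum[OF A B] by auto
qed

lemma hunit_deg0: "hunit E s t \<in> Hdeg E s t (\<lambda>i. 0)"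
  unfolding Hdeg_def using hunit_HQ by (auto simp: hunit_eq hbasis_def dimv_def zrep_def)

text \<open>Connectedness: the zero class is the only class of dimension zero.\<close>

lemma connected: assumes f: "f \<in> Hdeg E s t (\<lambda>i. 0)" shows "\<exists>c. f = hsmult c (hunit E s t)"
proof -
  have "X = zrep" if "f X \<noteq> 0" for X
    using dimv_zero[OF Classes_valid[OF HQ_D(1)[OF Hdeg_D(2)[OF f] that]] Hdeg_D(1)[OF f that]] .
  then have "f = hsmult (f zrep) (hunit E s t)"
    unfolding hsmult_def hunit_eq hbasis_def by (intro ext) auto
  then show ?thesis by blast
qed

theorem bialgebra: assumes fE: "finite E" shows "graded_connected_cocomm_bialgebra E s t"
  unfolding graded_connected_cocomm_bialgebra_def
  using hunit_HQ hmult_HQ[OF fE] hmult_assoc hmult_unit_l hmult_unit_r comult_HQ2[OF fE]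
    coassoc counit_comult cocomm comult_mult comult_unit hcounit_mult Hdeg_mult[OF fE] Hdeg_comult
    hunit_deg0 connected
  by (simp add: hcounit_def hunit_eq canon_zrep hbasis_def)

section \<open>The antipode\<close>

lemma hmult_sum_l: "hmult E s t (\<lambda>Y. \<Sum>j\<in>J. F j Y) g = (\<lambda>M. \<Sum>j\<in>J. hmult E s t (F j) g M)"
  unfolding hmult_def by (auto intro!: ext simp: sum_distrib_right intro: sum.swap)

lemma hmult_sum_r: "hmult E s t g (\<lambda>Y. \<Sum>j\<in>J. F j Y) = (\<lambda>M. \<Sum>j\<in>J. hmult E s t g (F j) M)"
  unfolding hmult_def by (auto intro!: ext simp: sum_distrib_left intro: sum.swap)

lemma hmult_zero_r: "hmult E s t g (\<lambda>Y. 0) = (\<lambda>Y. 0)"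
  unfolding hmult_def by auto

lemma hmult_zero_l: "hmult E s t (\<lambda>Y. 0) g = (\<lambda>Y. 0)"
  unfolding hmult_def by auto

text \<open>The splittings of a class X are the pairs of classes (A, B) with A (+) B in X; they are the
  terms of Delta([X]).  The degree of a class is its total dimension.\<close>

definition splittings :: "('v,'e) rep \<Rightarrow> (('v,'e) rep \<times> ('v,'e) rep) set" where
  "splittings X = {(A, B). A \<in> Classes \<and> B \<in> Classes \<and> cls (dsum A B) = X}"

definition degree :: "('v,'e) rep \<Rightarrow> nat" where
  "degree X = (\<Sum>i\<in>UNIV. dimv X i)"

text \<open>The convolution unit: the function X \<mapsto> epsilon([X]) 1.\<close>

definition counit_unit :: "('v,'e) rep \<Rightarrow> ('v,'e) rep \<Rightarrow> complex" where
  "counit_unit X = (if X = zrep then hbasis zrep else (\<lambda>Y. 0))"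

lemma splittingsD: assumes "p \<in> splittings X"
  shows "fst p \<in> Classes" "snd p \<in> Classes" "cls (dsum (fst p) (snd p)) = X"
  using assms unfolding splittings_def by auto

lemma splittings_finite: assumes fE: "finite E" shows "finite (splittings X)"
  unfolding splittings_def using finite_summands[OF fE, of "{X}"] by simp

lemma splittings_empty: "X \<notin> Classes \<Longrightarrow> splittings X = {}"
  unfolding splittings_def using canon_Classes valid_dsum Classes_valid by blast

lemma splittings_zero_r: assumes X: "X \<in> Classes"
  shows "p \<in> splittings X \<and> snd p = zrep \<longleftrightarrow> p = (X, zrep)"
proof -
  obtain A B where p: "p = (A, B)" by (cases p)
  have "cls (dsum A zrep) = A" if "A \<in> Classes"
    using canon_eq[OF dsum_zero_r[OF Classes_valid[OF that]]] canon_idem[OF that] by simp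
  moreover have "cls (dsum X zrep) = X"
    using canon_eq[OF dsum_zero_r[OF Classes_valid[OF X]]] canon_idem[OF X] by simp
  ultimately show ?thesis using X zrep_Classes unfolding splittings_def p by auto
qed

lemma splittings_zero_l: assumes X: "X \<in> Classes"
  shows "p \<in> splittings X \<and> fst p = zrep \<longleftrightarrow> p = (zrep, X)"
proof -
  obtain A B where p: "p = (A, B)" by (cases p)
  have "cls (dsum zrep B) = B" if "B \<in> Classes"
    using canon_eq[OF dsum_zero_l[OF Classes_valid[OF that]]] canon_idem[OF that] by simp
  moreover have "cls (dsum zrep X) = X"
    using canon_eq[OF dsum_zero_l[OF Classes_valid[OF X]]] canon_idem[OF X] by simp
  ultimately show ?thesis using X zrep_Classes unfolding splittings_def p by auto
qed

text \<open>Degree is additive over splittings and vanishes only on the zero class; so in a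
  nontrivial splitting both summands have smaller degree, which makes the recursive
  construction of the antipode well-founded.\<close>

lemma degree_splitting: assumes p: "p \<in> splittings X"
  shows "degree X = degree (fst p) + degree (snd p)"
proof -
  have A: "valid (fst p)" and B: "valid (snd p)" using splittingsD(1,2)[OF p] Classes_valid by blast+
  have "dimv X = dimv (dsum (fst p) (snd p))"
    using splittingsD(3)[OF p] dimv_canon[OF valid_dsum[OF A B]] by simp
  then show ?thesis unfolding degree_def by (simp add: dimv_dsum[OF A B] sum.distrib)
qed

lemma degree_pos: assumes "X \<in> Classes" "X \<noteq> zrep" shows "degree X > 0"
proof (rule ccontr)
  assume "\<not> degree X > 0"
  then have "dimv X = (\<lambda>i. 0)" unfolding degree_def by (auto intro!: ext)
  then show False using dimv_zero[OF Classes_valid] assms by blast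
qed

lemma degree_splitting_less:
  assumes "p \<in> splittings X"
  shows "snd p \<noteq> zrep \<Longrightarrow> degree (fst p) < degree X" "fst p \<noteq> zrep \<Longrightarrow> degree (snd p) < degree X"
  using degree_splitting[OF assms] degree_pos[OF splittingsD(1)[OF assms]] degree_pos[OF splittingsD(2)[OF assms]]
  by auto

text \<open>Left and right antipode on basis elements, by recursion on the degree: the defining
  equations are sum over splittings (A, B) of X of S(A) [B] = epsilon([X]) 1, resp.
  sum of [A] S(B) = epsilon([X]) 1, solved for the term with trivial second, resp. first, factor.\<close>

function antipode_l :: "('v,'e) rep \<Rightarrow> ('v,'e) rep \<Rightarrow> complex" where
  "antipode_l X = (if X \<in> Classes then (\<lambda>Y. counit_unit X Y - (\<Sum>p\<in>{p \<in> splittings X. snd p \<noteq> zrep}.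
      hmult E s t (antipode_l (fst p)) (hbasis (snd p)) Y)) else (\<lambda>Y. 0))"
  by auto
termination
  by (relation "measure degree") (auto intro: degree_splitting_less)

function antipode_r :: "('v,'e) rep \<Rightarrow> ('v,'e) rep \<Rightarrow> complex" where
  "antipode_r X = (if X \<in> Classes then (\<lambda>Y. counit_unit X Y - (\<Sum>p\<in>{p \<in> splittings X. fst p \<noteq> zrep}.
      hmult E s t (hbasis (fst p)) (antipode_r (snd p)) Y)) else (\<lambda>Y. 0))"
  by auto
termination
  by (relation "measure degree") (auto intro: degree_splitting_less)

declare antipode_l.simps[simp del] antipode_r.simps[simp del]

lemma counit_unit_HQ: "counit_unit X \<in> HQ E s t"
  unfolding counit_unit_def using hbasis_HQ[OF zrep_Classes] HQ_zero by simp

lemma antipode_l_HQ: assumes fE: "finite E" shows "antipode_l X \<in> HQ E s t"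
proof (induction X rule: antipode_l.induct)
  case (1 X)
  have "(\<lambda>Y. \<Sum>p\<in>{p \<in> splittings X. snd p \<noteq> zrep}. hmult E s t (antipode_l (fst p)) (hbasis (snd p)) Y) \<in> HQ E s t"
    if X: "X \<in> Classes"
  proof (rule HQ_sum)
    fix p assume p: "p \<in> {p \<in> splittings X. snd p \<noteq> zrep}"
    then show "hmult E s t (antipode_l (fst p)) (hbasis (snd p)) \<in> HQ E s t"
      using hmult_HQ[OF fE 1[OF X p] hbasis_HQ[OF splittingsD(2)]] by blast
  qed (simp add: splittings_finite[OF fE])
  then show ?case
    using HQ_pointwise[OF counit_unit_HQ, of _ "(-)"] HQ_zero by (subst antipode_l.simps) auto
qed

lemma antipode_r_HQ: assumes fE: "finite E" shows "antipode_r X \<in> HQ E s t"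
proof (induction X rule: antipode_r.induct)
  case (1 X)
  have "(\<lambda>Y. \<Sum>p\<in>{p \<in> splittings X. fst p \<noteq> zrep}. hmult E s t (hbasis (fst p)) (antipode_r (snd p)) Y) \<in> HQ E s t"
    if X: "X \<in> Classes"
  proof (rule HQ_sum)
    fix p assume p: "p \<in> {p \<in> splittings X. fst p \<noteq> zrep}"
    then show "hmult E s t (hbasis (fst p)) (antipode_r (snd p)) \<in> HQ E s t"
      using hmult_HQ[OF fE hbasis_HQ[OF splittingsD(1)] 1[OF X p]] by blast
  qed (simp add: splittings_finite[OF fE])
  then show ?case
    using HQ_pointwise[OF counit_unit_HQ, of _ "(-)"] HQ_zero by (subst antipode_r.simps) auto
qed

text \<open>The antipode identities say that the left,
  resp. right, antipode is a left, resp. right, convolution inverse of the basis.\<close>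

definition conv :: "(('v,'e) rep \<Rightarrow> ('v,'e) rep \<Rightarrow> complex) \<Rightarrow> (('v,'e) rep \<Rightarrow> ('v,'e) rep \<Rightarrow> complex)
    \<Rightarrow> ('v,'e) rep \<Rightarrow> ('v,'e) rep \<Rightarrow> complex" where
  "conv P R X = (\<lambda>Y. \<Sum>p\<in>splittings X. hmult E s t (P (fst p)) (R (snd p)) Y)"

lemma conv_antipode_l: assumes fE: "finite E" shows "conv antipode_l hbasis X = counit_unit X"
proof (cases "X \<in> Classes")
  case False
  then show ?thesis using zrep_Classes unfolding conv_def counit_unit_def splittings_empty[OF False] by auto
next
  case True
  let ?R = "{p \<in> splittings X. snd p \<noteq> zrep}"
  let ?rest = "\<lambda>Y. \<Sum>p\<in>?R. hmult E s t (antipode_l (fst p)) (hbasis (snd p)) Y"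
  have fR: "finite ?R" using splittings_finite[OF fE] by simp
  have pe: "splittings X = insert (X, zrep) ?R" using splittings_zero_r[OF True] by auto
  have ni: "(X, zrep) \<notin> ?R" by simp
  have "conv antipode_l hbasis X = (\<lambda>Y. hmult E s t (antipode_l X) (hbasis zrep) Y + ?rest Y)"
    unfolding conv_def by (subst pe) (simp only: sum.insert[OF fR ni] fst_conv snd_conv)
  also have "\<dots> = (\<lambda>Y. antipode_l X Y + ?rest Y)"
    using hmult_unit_r[OF antipode_l_HQ[OF fE]] unfolding hunit_eq by simp
  also have "\<dots> = counit_unit X"
    using True by (subst antipode_l.simps) simp
  finally show ?thesis .
qed

lemma conv_antipode_r: assumes fE: "finite E" shows "conv hbasis antipode_r X = counit_unit X"
proof (cases "X \<in> Classes")
  case False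
  then show ?thesis using zrep_Classes unfolding conv_def counit_unit_def splittings_empty[OF False] by auto
next
  case True
  let ?R = "{p \<in> splittings X. fst p \<noteq> zrep}"
  let ?rest = "\<lambda>Y. \<Sum>p\<in>?R. hmult E s t (hbasis (fst p)) (antipode_r (snd p)) Y"
  have fR: "finite ?R" using splittings_finite[OF fE] by simp
  have pe: "splittings X = insert (zrep, X) ?R" using splittings_zero_l[OF True] by auto
  have ni: "(zrep, X) \<notin> ?R" by simp
  have "conv hbasis antipode_r X = (\<lambda>Y. hmult E s t (hbasis zrep) (antipode_r X) Y + ?rest Y)"
    unfolding conv_def by (subst pe) (simp only: sum.insert[OF fR ni] fst_conv snd_conv)
  also have "\<dots> = (\<lambda>Y. antipode_r X Y + ?rest Y)"
    using hmult_unit_l[OF antipode_r_HQ[OF fE]] unfolding hunit_eq by simp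
  also have "\<dots> = counit_unit X"
    using True by (subst antipode_r.simps) simp
  finally show ?thesis .
qed

text \<open>Convolution is associative: both bracketings are sums over the triples (A, B, C) with
  (A (+) B) (+) C in X, using associativity of the direct sum and of the product.\<close>

definition triples :: "('v,'e) rep \<Rightarrow> (('v,'e) rep \<times> ('v,'e) rep \<times> ('v,'e) rep) set" where
  "triples X = {(a, b, c). a \<in> Classes \<and> b \<in> Classes \<and> c \<in> Classes \<and> cls (dsum (cls (dsum a b)) c) = X}"

lemma conv_conv_left: assumes fE: "finite E"
  shows "conv (conv P Q) R X Y = (\<Sum>(a, b, c)\<in>triples X. hmult E s t (hmult E s t (P a) (Q b)) (R c) Y)"
proof -
  have "conv (conv P Q) R X Y = (\<Sum>q\<in>splittings X. \<Sum>p\<in>splittings (fst q).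
      hmult E s t (hmult E s t (P (fst p)) (Q (snd p))) (R (snd q)) Y)"
    unfolding conv_def hmult_sum_l ..
  also have "\<dots> = (\<Sum>(q, p)\<in>Sigma (splittings X) (\<lambda>q. splittings (fst q)).
      hmult E s t (hmult E s t (P (fst p)) (Q (snd p))) (R (snd q)) Y)"
    by (rule sum.Sigma) (use splittings_finite[OF fE] in auto)
  also have "\<dots> = (\<Sum>(a, b, c)\<in>triples X. hmult E s t (hmult E s t (P a) (Q b)) (R c) Y)"
  proof (rule sum.reindex_bij_witness[where j = "\<lambda>(q, p). (fst p, snd p, snd q)"
        and i = "\<lambda>(a, b, c). ((cls (dsum a b), c), (a, b))"])
    fix w assume "w \<in> triples X"
    then obtain a b c where w: "w = (a, b, c)" and a: "a \<in> Classes" and b: "b \<in> Classes"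
      and "c \<in> Classes" "cls (dsum (cls (dsum a b)) c) = X"
      unfolding triples_def by blast
    moreover have "cls (dsum a b) \<in> Classes" using canon_Classes[OF valid_dsum[OF Classes_valid[OF a] Classes_valid[OF b]]] .
    ultimately show "(\<lambda>(a, b, c). ((cls (dsum a b), c), (a, b))) w \<in> Sigma (splittings X) (\<lambda>q. splittings (fst q))"
      unfolding splittings_def by simp
  qed (auto simp: triples_def splittings_def)
  finally show ?thesis .
qed

lemma conv_conv_right: assumes fE: "finite E"
  shows "conv P (conv Q R) X Y = (\<Sum>(a, b, c)\<in>triples X. hmult E s t (P a) (hmult E s t (Q b) (R c)) Y)"
proof -
  have "conv P (conv Q R) X Y = (\<Sum>q\<in>splittings X. \<Sum>p\<in>splittings (snd q).
      hmult E s t (P (fst q)) (hmult E s t (Q (fst p)) (R (snd p))) Y)"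
    unfolding conv_def hmult_sum_r ..
  also have "\<dots> = (\<Sum>(q, p)\<in>Sigma (splittings X) (\<lambda>q. splittings (snd q)).
      hmult E s t (P (fst q)) (hmult E s t (Q (fst p)) (R (snd p))) Y)"
    by (rule sum.Sigma) (use splittings_finite[OF fE] in auto)
  also have "\<dots> = (\<Sum>(a, b, c)\<in>triples X. hmult E s t (P a) (hmult E s t (Q b) (R c)) Y)"
  proof (rule sum.reindex_bij_witness[where j = "\<lambda>(q, p). (fst q, fst p, snd p)"
        and i = "\<lambda>(a, b, c). ((a, cls (dsum b c)), (b, c))"])
    fix w assume "w \<in> triples X"
    then obtain a b c where w: "w = (a, b, c)" and a: "a \<in> Classes" and b: "b \<in> Classes"
      and c: "c \<in> Classes" and X: "cls (dsum (cls (dsum a b)) c) = X"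
      unfolding triples_def by blast
    moreover have "cls (dsum b c) \<in> Classes" using canon_Classes[OF valid_dsum[OF Classes_valid[OF b] Classes_valid[OF c]]] .
    ultimately show "(\<lambda>(a, b, c). ((a, cls (dsum b c)), (b, c))) w \<in> Sigma (splittings X) (\<lambda>q. splittings (snd q))"
      unfolding splittings_def using canon_dsum_assoc[OF a b c] by simp
  next
    fix qp assume "qp \<in> Sigma (splittings X) (\<lambda>q. splittings (snd q))"
    then obtain a b c where qp: "qp = ((a, cls (dsum b c)), (b, c))" and "a \<in> Classes" "b \<in> Classes"
      "c \<in> Classes" "cls (dsum a (cls (dsum b c))) = X"
      unfolding splittings_def by auto
    then show "(\<lambda>(q, p). (fst q, fst p, snd p)) qp \<in> triples X"
      unfolding triples_def using canon_dsum_assoc by simp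
  qed (auto simp: triples_def splittings_def)
  finally show ?thesis .
qed

lemma conv_assoc: assumes fE: "finite E"
  shows "conv (conv P Q) R X = conv P (conv Q R) X"
  using conv_conv_left[OF fE] conv_conv_right[OF fE] by (simp add: hmult_assoc ext)

lemma conv_unit_r: assumes fE: "finite E" and P: "P X \<in> HQ E s t" and P0: "X \<notin> Classes \<Longrightarrow> P X = (\<lambda>Y. 0)"
  shows "conv P counit_unit X = P X"
proof (cases "X \<in> Classes")
  case False then show ?thesis unfolding conv_def using splittings_empty P0 by simp
next
  case True
  have "hmult E s t (P (fst p)) (counit_unit (snd p)) = (if p = (X, zrep) then P X else (\<lambda>Y. 0))"
    if "p \<in> splittings X" for p
    using that splittings_zero_r[OF True, of p] hmult_unit_r[OF P] hmult_zero_r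
    unfolding hunit_eq counit_unit_def by auto
  then show ?thesis
    unfolding conv_def using splittings_zero_r[OF True, of "(X, zrep)"] splittings_finite[OF fE, of X]
    by (simp add: ext if_distrib[of "\<lambda>f. f _"] cong: sum.cong)
qed

lemma conv_unit_l: assumes fE: "finite E" and P: "P X \<in> HQ E s t" and P0: "X \<notin> Classes \<Longrightarrow> P X = (\<lambda>Y. 0)"
  shows "conv counit_unit P X = P X"
proof (cases "X \<in> Classes")
  case False then show ?thesis unfolding conv_def using splittings_empty P0 by simp
next
  case True
  have "hmult E s t (counit_unit (fst p)) (P (snd p)) = (if p = (zrep, X) then P X else (\<lambda>Y. 0))"
    if "p \<in> splittings X" for p
    using that splittings_zero_l[OF True, of p] hmult_unit_l[OF P] hmult_zero_l
    unfolding hunit_eq counit_unit_def by auto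
  then show ?thesis
    unfolding conv_def using splittings_zero_l[OF True, of "(zrep, X)"] splittings_finite[OF fE, of X]
    by (simp add: ext if_distrib[of "\<lambda>f. f _"] cong: sum.cong)
qed

text \<open>Left and right inverse of the basis family coincide: S_L = S_L * (1 * S_R) = (S_L * 1) * S_R = S_R.\<close>

lemma antipode_l_eq_r: assumes fE: "finite E" shows "antipode_l X = antipode_r X"
proof -
  have out: "X \<notin> Classes \<Longrightarrow> antipode_l X = (\<lambda>Y. 0)" "X \<notin> Classes \<Longrightarrow> antipode_r X = (\<lambda>Y. 0)" for X
    by (simp_all add: antipode_l.simps antipode_r.simps)
  have inv_r: "conv hbasis antipode_r = counit_unit" and inv_l: "conv antipode_l hbasis = counit_unit"
    using conv_antipode_r[OF fE] conv_antipode_l[OF fE] by (simp_all add: ext)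
  have "antipode_l X = conv antipode_l (conv hbasis antipode_r) X"
    unfolding inv_r using conv_unit_r[OF fE antipode_l_HQ[OF fE] out(1)] by simp
  also have "\<dots> = conv (conv antipode_l hbasis) antipode_r X" using conv_assoc[OF fE] by simp
  also have "\<dots> = antipode_r X"
    unfolding inv_l using conv_unit_l[OF fE antipode_r_HQ[OF fE] out(2)] by simp
  finally show ?thesis .
qed

definition antipode_map :: "(('v,'e) rep \<Rightarrow> complex) \<Rightarrow> ('v,'e) rep \<Rightarrow> complex" where
  "antipode_map f = (\<lambda>Y. \<Sum>X\<in>{X. f X \<noteq> 0}. f X * antipode_l X Y)"

lemma antipode_map_eq: assumes "finite U" "{X. f X \<noteq> 0} \<subseteq> U" shows "antipode_map f Y = (\<Sum>X\<in>U. f X * antipode_l X Y)"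
  unfolding antipode_map_def by (rule sum.mono_neutral_left[OF assms]) auto

lemma antipode_map_HQ: assumes fE: "finite E" and f: "f \<in> HQ E s t" shows "antipode_map f \<in> HQ E s t"
  unfolding antipode_map_def
proof (rule HQ_sum[OF HQ_D(2)[OF f]])
  fix X show "(\<lambda>Y. f X * antipode_l X Y) \<in> HQ E s t"
    using HQ_pointwise[OF antipode_l_HQ[OF fE] antipode_l_HQ[OF fE], of "\<lambda>a b. f X * a"] by simp
qed

lemma antipode_map_add: assumes f: "f \<in> HQ E s t" and g: "g \<in> HQ E s t"
  shows "antipode_map (\<lambda>X. f X + g X) = (\<lambda>X. antipode_map f X + antipode_map g X)"
proof (rule ext)
  fix Y
  let ?U = "{X. f X \<noteq> 0} \<union> {X. g X \<noteq> 0}"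
  have fU: "finite ?U" using HQ_D(2) f g by blast
  have "antipode_map (\<lambda>X. f X + g X) Y = (\<Sum>X\<in>?U. (f X + g X) * antipode_l X Y)" by (rule antipode_map_eq[OF fU]) auto
  also have "\<dots> = (\<Sum>X\<in>?U. f X * antipode_l X Y) + (\<Sum>X\<in>?U. g X * antipode_l X Y)"
    by (simp add: distrib_right sum.distrib)
  also have "\<dots> = antipode_map f Y + antipode_map g Y" using antipode_map_eq[OF fU, of f Y] antipode_map_eq[OF fU, of g Y] by auto
  finally show "antipode_map (\<lambda>X. f X + g X) Y = antipode_map f Y + antipode_map g Y" .
qed

lemma antipode_map_smult: assumes f: "f \<in> HQ E s t" shows "antipode_map (hsmult c f) = hsmult c (antipode_map f)"
proof (rule ext)
  fix Y
  let ?U = "{X. f X \<noteq> 0}"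
  have fU: "finite ?U" using HQ_D(2) f by blast
  have "antipode_map (hsmult c f) Y = (\<Sum>X\<in>?U. (c * f X) * antipode_l X Y)" unfolding hsmult_def by (rule antipode_map_eq[OF fU]) auto
  also have "\<dots> = c * (\<Sum>X\<in>?U. f X * antipode_l X Y)" by (simp add: sum_distrib_left mult.assoc)
  also have "\<dots> = hsmult c (antipode_map f) Y" unfolding hsmult_def antipode_map_def ..
  finally show "antipode_map (hsmult c f) Y = hsmult c (antipode_map f) Y" .
qed

lemma antipode_map_basis: "antipode_map (hbasis A) = antipode_l A"
proof (rule ext)
  fix Y
  have "{X. hbasis A X \<noteq> 0} = {A}" unfolding hbasis_def by auto
  then show "antipode_map (hbasis A) Y = antipode_l A Y" unfolding antipode_map_def by (simp add: hbasis_def)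
qed

text \<open>Regrouping the terms of Delta(f) by the class of A (+) B turns an expression
  sum Delta(f)(A, B) G(A, B) into sum f(Z) (sum over splittings of Z of G); if the inner sums
  are epsilon([Z]) 1 (evaluated at X), the total is epsilon(f) 1 (at X).\<close>

lemma sum_comult: assumes fE: "finite E" and f: "f \<in> HQ E s t"
  shows "(\<Sum>p\<in>{p. hcomult E s t f p \<noteq> 0}. hcomult E s t f p * G p)
       = (\<Sum>Z\<in>{Z. f Z \<noteq> 0}. f Z * (\<Sum>p\<in>splittings Z. G p))"
proof -
  let ?S = "{p. hcomult E s t f p \<noteq> 0}" and ?T = "{Z. f Z \<noteq> 0}"
  let ?g = "\<lambda>p. cls (dsum (fst p) (snd p))"
  have fS: "finite ?S" using comult_HQ2[OF fE f] unfolding HQ2_def by blast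
  have fT: "finite ?T" using HQ_D(2)[OF f] .
  have memS: "p \<in> ?S \<longleftrightarrow> fst p \<in> Classes \<and> snd p \<in> Classes \<and> f (?g p) \<noteq> 0" for p
    unfolding hcomult_def by (cases p) auto
  have gST: "?g ` ?S \<subseteq> ?T" using memS by blast
  have "(\<Sum>p\<in>?S. hcomult E s t f p * G p) = (\<Sum>Z\<in>?T. \<Sum>p\<in>{p \<in> ?S. ?g p = Z}. hcomult E s t f p * G p)"
    by (rule sum.group[OF fS fT gST, symmetric])
  also have "\<dots> = (\<Sum>Z\<in>?T. f Z * (\<Sum>p\<in>splittings Z. G p))"
  proof (rule sum.cong[OF refl])
    fix Z assume Z: "Z \<in> ?T"
    have e: "{p \<in> ?S. ?g p = Z} = splittings Z" unfolding splittings_def using memS Z by auto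
    have "(\<Sum>p\<in>splittings Z. hcomult E s t f p * G p) = (\<Sum>p\<in>splittings Z. f Z * G p)"
    proof (rule sum.cong[OF refl])
      fix p assume p: "p \<in> splittings Z"
      show "hcomult E s t f p * G p = f Z * G p"
        using splittingsD[OF p] unfolding hcomult_def by (cases p) auto
    qed
    then show "(\<Sum>p\<in>{p \<in> ?S. ?g p = Z}. hcomult E s t f p * G p) = f Z * (\<Sum>p\<in>splittings Z. G p)"
      unfolding e by (simp add: sum_distrib_left)
  qed
  finally show ?thesis .
qed

lemma counit_unit_sum: assumes f: "f \<in> HQ E s t"
  shows "(\<Sum>Z\<in>{Z. f Z \<noteq> 0}. f Z * counit_unit Z X) = hcounit E s t f * hunit E s t X"
proof -
  have "(\<Sum>Z\<in>{Z. f Z \<noteq> 0}. f Z * counit_unit Z X) = (\<Sum>Z\<in>{Z. f Z \<noteq> 0}. if Z = zrep then f zrep * hbasis zrep X else 0)"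
    unfolding counit_unit_def by (rule sum.cong) auto
  also have "\<dots> = f zrep * hbasis zrep X" using HQ_D(2)[OF f] by (simp add: sum.delta)
  finally show ?thesis unfolding hcounit_def hunit_eq canon_zrep .
qed

lemma comult_sum_counit:
  assumes fE: "finite E" and f: "f \<in> HQ E s t"
    and G: "\<And>Z. (\<Sum>p\<in>splittings Z. G p) = counit_unit Z X"
  shows "(\<Sum>p\<in>{p. hcomult E s t f p \<noteq> 0}. hcomult E s t f p * G p) = hcounit E s t f * hunit E s t X"
  unfolding sum_comult[OF fE f] G using counit_unit_sum[OF f] .

theorem has_antipode_HQ: assumes fE: "finite E" shows "has_antipode E s t"
  unfolding has_antipode_def
proof (intro exI[of _ antipode_map] conjI ballI allI)
  fix f assume f: "f \<in> HQ E s t"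
  show "antipode_map f \<in> HQ E s t" using antipode_map_HQ[OF fE f] .
  fix g assume g: "g \<in> HQ E s t"
  show "antipode_map (\<lambda>X. f X + g X) = (\<lambda>X. antipode_map f X + antipode_map g X)" using antipode_map_add[OF f g] .
next
  fix c f assume f: "f \<in> HQ E s t"
  show "antipode_map (hsmult c f) = hsmult c (antipode_map f)" using antipode_map_smult[OF f] .
next
  fix f X assume f: "f \<in> HQ E s t"
  have l: "(\<Sum>p\<in>splittings Z. hmult E s t (antipode_l (fst p)) (hbasis (snd p)) X) = counit_unit Z X" for Z
    using fun_cong[OF conv_antipode_l[OF fE, of Z], of X] unfolding conv_def .
  have r: "(\<Sum>p\<in>splittings Z. hmult E s t (hbasis (fst p)) (antipode_r (snd p)) X) = counit_unit Z X" for Z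
    using fun_cong[OF conv_antipode_r[OF fE, of Z], of X] unfolding conv_def .
  show "(\<Sum>p\<in>{p. hcomult E s t f p \<noteq> 0}. hcomult E s t f p * hmult E s t (antipode_map (hbasis (fst p))) (hbasis (snd p)) X)
      = hcounit E s t f * hunit E s t X"
    unfolding antipode_map_basis using comult_sum_counit[OF fE f l] .
  show "(\<Sum>p\<in>{p. hcomult E s t f p \<noteq> 0}. hcomult E s t f p * hmult E s t (hbasis (fst p)) (antipode_map (hbasis (snd p))) X)
      = hcounit E s t f * hunit E s t X"
    unfolding antipode_map_basis antipode_l_eq_r[OF fE] using comult_sum_counit[OF fE f r] .
qed

end

theorem mainTheorem9:
  fixes E :: "'e set" and s t :: "'e \<Rightarrow> 'v::finite"
  assumes "finite E"
  shows "(\<forall>M\<in>IsoQ E s t. \<forall>N\<in>IsoQ E s t.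
            hcomult E s t (hmult E s t (hbasis M) (hbasis N))
              = hmult2 E s t (hcomult E s t (hbasis M)) (hcomult E s t (hbasis N)))
         \<and> graded_connected_cocomm_bialgebra E s t
         \<and> has_antipode E s t"
  using comult_mult bialgebra[OF assms] has_antipode_HQ[OF assms] by blast

end
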